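(* Let $N\in\mathbb{N}$, $s\in(0,1)$ with $N\geq 2s$, and let $$\mathcal{G}_{s,\infty}(x,y)=\frac{\kappa_{N,s}}{2}|x-y|^{2s-N}\int_0^{\frac{4x_1y_1}{|x-y|^2}}\frac{r^{s-1}}{(r+1)^{N/2}}dr\quad\text{for }x,y\in\mathbb{R}^N_+,$$ and $\mathcal{P}_s(x)=\mathcal{K}_s|x|^{-N}x_1^s$ for $x\in\mathbb{R}^N_+$. Then $\epsilon^{-s}\mathcal{G}_{s,\infty}(\cdot,\epsilon e_1)\to\mathcal{P}_s$ as $\epsilon\to0^+$ in $L^1_s(\mathbb{R}^N_+)$ and uniformly on every compact subset of $\mathbb{R}^N_+$. Moreover, for every $\varphi\in\mathbb{X}_s(\mathbb{R}^N_+)$, $$\lim_{\epsilon\to0^+}\int_{\mathbb{R}^N_+}\epsilon^{-s}\mathcal{G}_{s,\infty}(x,\epsilon e_1)\,(-\Delta)^s\varphi(x)\,dx=\int_{\mathbb{R}^N_+}\mathcal{P}_s(x)\,(-\Delta)^s\varphi(x)\,dx.$$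
   Context: Write $x=(x_1,x')$, $\mathbb{R}^N_+=(0,\infty)\times\mathbb{R}^{N-1}$, $e_1=(1,0,\dots,0)$. Constants: $\kappa_{N,s}=\pi^{-(N/2+1)}\Gamma(N/2)\sin(\pi s)$, $\mathcal{K}_s=\kappa_{N,s}2^{2s-1}s^{-1}$, $c_{N,s}=2^{2s}\pi^{-N/2}s\Gamma(\frac{N+2s}{2})/\Gamma(1-s)$. Convergence in $L^1_s(\mathbb{R}^N_+)$ means convergence in the norm $\int_{\mathbb{R}^N_+}\frac{|f(x)|}{1+|x|^{N+2s}}dx$. For $u:\mathbb{R}^N\to\mathbb{R}$, $(-\Delta)^s_\epsilon u(x)=c_{N,s}\int_{B_{1/\epsilon}\setminus B_\epsilon}\frac{u(x)-u(x+z)}{|z|^{N+2s}}dz$ and $(-\Delta)^s u=\lim_{\epsilon\to0^+}(-\Delta)^s_\epsilon u$. The test space $\mathbb{X}_s(\mathbb{R}^N_+)$ is the set of $\xi\in C(\mathbb{R}^N)$ such that: (i) $\xi$ has compact support contained in $\overline{\mathbb{R}^N_+}$; (ii) $\rho^{-s}\xi$ is continuous in $\overline{\mathbb{R}^N_+}$, where $\rho(x)=(x_1)_+$, and $\|(-\Delta)^s\xi\|_{L^\infty(\mathbb{R}^N_+)}<\infty$; (iii) there exist $\varphi\in L^1(\mathbb{R}^N_+,\rho^s dx)$ and $\epsilon_0>0$ with $|(-\Delta)^s_\epsilon\xi|\le\varphi$ a.e. in $\mathbb{R}^N_+$ for all $\epsilon\in(0,\epsilon_0]$. *)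

theory Defs
  imports "HOL-Analysis.Analysis"
begin

text \<open>Euclidean space R^N is modelled as real^'n with N = CARD('n); the index i1 plays
the role of the first coordinate x_1.\<close>

definition halfsp :: "'n::finite \<Rightarrow> (real^'n) set" where
  "halfsp i1 = {x. x $ i1 > 0}"

definition kappa :: "nat \<Rightarrow> real \<Rightarrow> real" where
  "kappa N s = pi powr (-(real N / 2 + 1)) * Gamma (real N / 2) * sin (pi * s)"

definition Kcal :: "nat \<Rightarrow> real \<Rightarrow> real" where
  "Kcal N s = kappa N s * 2 powr (2 * s - 1) / s"

definition cNs :: "nat \<Rightarrow> real \<Rightarrow> real" where
  "cNs N s = 2 powr (2 * s) * pi powr (- real N / 2) * s * Gamma ((real N + 2 * s) / 2)
             / Gamma (1 - s)"

definition Ginf :: "'n::finite \<Rightarrow> real \<Rightarrow> real^'n \<Rightarrow> real^'n \<Rightarrow> real" where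
  "Ginf i1 s x y = kappa CARD('n) s / 2 * norm (x - y) powr (2 * s - real CARD('n)) *
     (LINT r:{0..4 * (x $ i1) * (y $ i1) / (norm (x - y))\<^sup>2}|lborel.
        r powr (s - 1) / (r + 1) powr (real CARD('n) / 2))"

definition Pcal :: "'n::finite \<Rightarrow> real \<Rightarrow> real^'n \<Rightarrow> real" where
  "Pcal i1 s x = Kcal CARD('n) s * norm x powr (- real CARD('n)) * (x $ i1) powr s"

definition frac_lap_eps :: "real \<Rightarrow> real \<Rightarrow> (real^'n::finite \<Rightarrow> real) \<Rightarrow> real^'n \<Rightarrow> real" where
  "frac_lap_eps s \<epsilon> u x = cNs CARD('n) s *
     (LINT z:(ball 0 (1 / \<epsilon>) - ball 0 \<epsilon>)|lebesgue.
        (u x - u (x + z)) / norm z powr (real CARD('n) + 2 * s))"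

definition frac_lap :: "real \<Rightarrow> (real^'n::finite \<Rightarrow> real) \<Rightarrow> real^'n \<Rightarrow> real" where
  "frac_lap s u x = Lim (at_right 0) (\<lambda>\<epsilon>. frac_lap_eps s \<epsilon> u x)"

definition Xs :: "'n::finite \<Rightarrow> real \<Rightarrow> (real^'n \<Rightarrow> real) set" where
  "Xs i1 s = {\<xi>. continuous_on UNIV \<xi>
     \<and> compact (closure {x. \<xi> x \<noteq> 0}) \<and> closure {x. \<xi> x \<noteq> 0} \<subseteq> {x. x $ i1 \<ge> 0}
     \<and> (\<exists>g. continuous_on {x. x $ i1 \<ge> 0} g \<and>
            (\<forall>x. x $ i1 > 0 \<longrightarrow> g x = \<xi> x / (x $ i1) powr s))
     \<and> (\<exists>C. AE x in lebesgue. x \<in> halfsp i1 \<longrightarrow>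
            ((\<lambda>\<epsilon>. frac_lap_eps s \<epsilon> \<xi> x) \<longlongrightarrow> frac_lap s \<xi> x) (at_right 0)
            \<and> \<bar>frac_lap s \<xi> x\<bar> \<le> C)
     \<and> (\<exists>\<phi> \<epsilon>0. \<phi> \<in> borel_measurable lebesgue
            \<and> set_integrable lebesgue (halfsp i1) (\<lambda>x. (x $ i1) powr s * \<phi> x)
            \<and> \<epsilon>0 > 0
            \<and> (\<forall>\<epsilon>\<in>{0<..\<epsilon>0}. AE x in lebesgue. x \<in> halfsp i1 \<longrightarrow>
                  \<bar>frac_lap_eps s \<epsilon> \<xi> x\<bar> \<le> \<phi> x))}"

end

theory Submission
  imports Defs
begin

(* Write t = 4 x_1 eps / |x - eps e_1|^2 for the upper limit of the integral defining
   G_{s,inf}(x, eps e_1). The elementary bounds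
     t^s / (s (1 + t)^{N/2})  <=  int_0^t r^{s-1} (r + 1)^{-N/2} dr  <=  t^s / s
   squeeze eps^{-s} G_{s,inf}(x, eps e_1) between K_s x_1^s |x + eps e_1|^{-N} and
   K_s x_1^s |x - eps e_1|^{-N}, and both converge to P_s locally uniformly on the open half space.
   For the weighted integrals split the half space at |x| = 3 eps. Away from the pole the upper
   bound is at most (3/2)^N P_s, so dominated convergence applies. Near the pole the cruder bound
   int_0^t <= 2 t^{s/2} / s gives |eps^{-s} G_{s,inf} - P_s| <~ |x - eps e_1|^{s-N} + |x|^{s-N},
   whose integral over a ball of radius 5 eps is O(eps^s) by a dyadic decomposition into annuli.
   Both weights, 1 / (1 + |x|^{N+2s}) and (-Delta)^s phi, are bounded near the origin and make
   P_s integrable at infinity. *)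

lemma integral_dominated_convergence_at_right_0:
  fixes f :: "real \<Rightarrow> 'a \<Rightarrow> real"
  assumes "\<And>t. f t \<in> borel_measurable M" "g \<in> borel_measurable M" "integrable M w"
    and lim: "AE x in M. ((\<lambda>t. f t x) \<longlongrightarrow> g x) (at_right 0)"
    and bound: "\<forall>\<^sub>F t in at_right 0. AE x in M. norm (f t x) \<le> w x"
  shows "((\<lambda>t. integral\<^sup>L M (f t)) \<longlongrightarrow> integral\<^sup>L M g) (at_right 0)"
proof -
  have "((\<lambda>t. integral\<^sup>L M (f (inverse t))) \<longlongrightarrow> integral\<^sup>L M g) at_top"
  proof (rule integral_dominated_convergence_at_top[where w = w])
    show "AE x in M. ((\<lambda>t. f (inverse t) x) \<longlongrightarrow> g x) at_top"
      using lim by eventually_elim (simp add: filterlim_at_right_to_top)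
    show "\<forall>\<^sub>F t in at_top. AE x in M. norm (f (inverse t) x) \<le> w x"
      using bound by (simp add: eventually_at_right_to_top)
  qed (use assms in auto)
  then show ?thesis
    by (simp add: filterlim_at_right_to_top)
qed

lemma uniform_limit_sandwich:
  fixes g l u :: "'a \<Rightarrow> 'b \<Rightarrow> real"
  assumes "uniform_limit K l h F" "uniform_limit K u h F"
    and "\<forall>\<^sub>F t in F. \<forall>x\<in>K. l t x \<le> g t x \<and> g t x \<le> u t x"
  shows "uniform_limit K g h F"
  unfolding uniform_limit_iff
proof (intro allI impI)
  fix e :: real assume "e > 0"
  with assms(1,2) have "\<forall>\<^sub>F t in F. \<forall>x\<in>K. dist (l t x) (h x) < e"
    "\<forall>\<^sub>F t in F. \<forall>x\<in>K. dist (u t x) (h x) < e"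
    unfolding uniform_limit_iff by auto
  with assms(3) show "\<forall>\<^sub>F t in F. \<forall>x\<in>K. dist (g t x) (h x) < e"
  proof eventually_elim
    case (elim t)
    show ?case
    proof
      fix x assume "x \<in> K"
      with elim have "l t x \<le> g t x" "g t x \<le> u t x" "\<bar>l t x - h x\<bar> < e" "\<bar>u t x - h x\<bar> < e"
        by (auto simp: dist_real_def)
      then show "dist (g t x) (h x) < e"
        unfolding dist_real_def abs_less_iff by linarith
    qed
  qed
qed

lemma uniform_limit_translate:
  fixes f :: "'a::euclidean_space \<Rightarrow> 'b::metric_space"
  assumes K: "compact K" "K \<subseteq> U" and U: "open U" and f: "continuous_on U f"
  shows "uniform_limit K (\<lambda>t x. f (x + t *\<^sub>R v)) f (at 0)"
  unfolding uniform_limit_iff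
proof (intro allI impI)
  fix e :: real assume e: "e > 0"
  obtain \<delta> where \<delta>: "\<delta> > 0" "(\<Union>x\<in>K. cball x \<delta>) \<subseteq> U"
    using compact_subset_open_imp_cball_epsilon_subset[OF K(1) U K(2)] by blast
  define T where "T = (\<Union>x\<in>K. cball x \<delta>)"
  have "uniformly_continuous_on T f"
    using \<delta> K(1) unfolding T_def
    by (intro compact_uniformly_continuous continuous_on_subset[OF f] compact_minkowski_sum_cball)
  then obtain \<rho> where \<rho>: "\<rho> > 0" "\<And>x y. x \<in> T \<Longrightarrow> y \<in> T \<Longrightarrow> dist y x < \<rho> \<Longrightarrow> dist (f y) (f x) < e"
    using e unfolding uniformly_continuous_on_def by metis
  have "\<forall>\<^sub>F t in at 0. norm (t *\<^sub>R v) < min \<delta> \<rho>"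
    using \<delta>(1) \<rho>(1) by (intro order_tendstoD tendsto_eq_intros) (auto intro: tendsto_ident_at)
  then show "\<forall>\<^sub>F t in at 0. \<forall>x\<in>K. dist (f (x + t *\<^sub>R v)) (f x) < e"
  proof eventually_elim
    case (elim t)
    show ?case
    proof
      fix x assume "x \<in> K"
      then have "x \<in> T" "x + t *\<^sub>R v \<in> T"
        using \<delta>(1) elim by (auto simp: T_def dist_norm intro!: bexI[of _ x])
      then show "dist (f (x + t *\<^sub>R v)) (f x) < e"
        using \<rho>(2) elim by (simp add: dist_norm)
    qed
  qed
qed

lemma tendsto_powr_at_right_0: "0 < a \<Longrightarrow> ((\<lambda>t::real. t powr a) \<longlongrightarrow> 0) (at_right 0)"
  by (intro tendsto_zero_powrI tendsto_ident_at tendsto_const)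
    (auto intro: eventually_mono[OF eventually_at_right_less] less_imp_le)

lemma filterlim_divide_Suc_at_right_0:
  fixes c :: real
  assumes "0 < c"
  shows "filterlim (\<lambda>n. c / real (Suc n)) (at_right 0) sequentially"
proof -
  have "(\<lambda>n. c / real (Suc n)) \<longlonglongrightarrow> 0"
    using tendsto_mult[OF tendsto_const[of c] LIMSEQ_inverse_real_of_nat] by (simp add: divide_inverse)
  then show ?thesis
    using assms by (simp add: filterlim_at)
qed

lemma borel_measurable_indicator_mult_AE_limit:
  fixes u :: "real \<Rightarrow> 'a::euclidean_space \<Rightarrow> real"
  assumes u: "\<And>\<epsilon>. \<epsilon> > 0 \<Longrightarrow> u \<epsilon> \<in> borel_measurable lebesgue" and A: "A \<in> sets lebesgue"
    and lim: "AE x in lebesgue. x \<in> A \<longrightarrow> ((\<lambda>\<epsilon>. u \<epsilon> x) \<longlongrightarrow> h x) (at_right 0)"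
  shows "(\<lambda>x. indicator A x * h x) \<in> borel_measurable lebesgue"
proof -
  define e where "e n = 1 / real (Suc n)" for n
  have e: "filterlim e (at_right 0) sequentially"
    unfolding e_def by (rule filterlim_divide_Suc_at_right_0) simp
  define g where "g x = lim (\<lambda>n. u (e n) x)" for x
  have "g \<in> borel_measurable lebesgue"
    unfolding g_def using u by (intro borel_measurable_lim_metric) (simp add: e_def)
  then have "(\<lambda>x. indicator A x * g x) \<in> borel_measurable lebesgue"
    using A by (intro borel_measurable_times borel_measurable_indicator)
  moreover have "AE x in lebesgue. indicator A x * g x = indicator A x * h x"
    using lim
  proof eventually_elim
    case (elim x)
    show ?case
    proof (cases "x \<in> A")
      case True
      then have "(\<lambda>n. u (e n) x) \<longlonglongrightarrow> h x"
        using elim filterlim_compose[OF _ e] by blast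
      then show ?thesis
        by (simp add: g_def limI)
    qed simp
  qed
  ultimately show ?thesis
    by (rule borel_measurable_AE)
qed

lemma AE_abs_le_of_tendsto_at_right_0:
  fixes u :: "real \<Rightarrow> 'a \<Rightarrow> real"
  assumes lim: "AE x in M. x \<in> A \<longrightarrow> ((\<lambda>\<epsilon>. u \<epsilon> x) \<longlongrightarrow> h x) (at_right 0)" and \<epsilon>0: "\<epsilon>0 > 0"
    and bound: "\<And>\<epsilon>. \<epsilon> \<in> {0<..\<epsilon>0} \<Longrightarrow> AE x in M. x \<in> A \<longrightarrow> \<bar>u \<epsilon> x\<bar> \<le> \<psi> x"
  shows "AE x in M. x \<in> A \<longrightarrow> \<bar>h x\<bar> \<le> \<psi> x"
proof -
  define e where "e n = \<epsilon>0 / real (Suc n)" for n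
  have e_mem: "e n \<in> {0<..\<epsilon>0}" for n
    using \<epsilon>0 by (auto simp: e_def field_simps)
  have e: "filterlim e (at_right 0) sequentially"
    unfolding e_def using \<epsilon>0 by (rule filterlim_divide_Suc_at_right_0)
  have "AE x in M. \<forall>n. x \<in> A \<longrightarrow> \<bar>u (e n) x\<bar> \<le> \<psi> x"
    using bound[OF e_mem] by (subst AE_all_countable) auto
  then show ?thesis
    using lim
  proof eventually_elim
    case (elim x)
    show ?case
    proof
      assume x: "x \<in> A"
      then have "(\<lambda>n. u (e n) x) \<longlonglongrightarrow> h x"
        using elim filterlim_compose[OF _ e] by blast
      then show "\<bar>h x\<bar> \<le> \<psi> x"
        using elim x by (intro tendsto_upperbound[OF tendsto_rabs]) auto
    qed
  qed
qed

lemma power2_powr: "0 \<le> u \<Longrightarrow> (u\<^sup>2) powr a = u powr (2 * a)"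
  for u a :: real
  by (simp add: powr_powr[symmetric])

lemma borel_measurable_vec_nth [measurable]: "(\<lambda>x::real^'n. x $ i) \<in> borel_measurable borel"
  by (intro borel_measurable_continuous_onI continuous_intros)

lemma vec_nth_le_norm: "x $ i \<le> norm (x :: real^'n)"
  using component_le_norm_cart[of x i] by simp

lemma integrable_integral_le_of_nn_integral_le:
  fixes f :: "'a \<Rightarrow> real"
  assumes f: "f \<in> borel_measurable M" "\<And>x. 0 \<le> f x"
    and le: "(\<integral>\<^sup>+x. ennreal (f x) \<partial>M) \<le> ennreal K" and K: "K \<ge> 0"
  shows "integrable M f" "integral\<^sup>L M f \<le> K"
proof -
  show i: "integrable M f"
    using f le_less_trans[OF le ennreal_less_top] by (intro integrableI_nonneg) auto
  have "ennreal (integral\<^sup>L M f) \<le> ennreal K"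
    using nn_integral_eq_integral[OF i] f le by simp
  then show "integral\<^sup>L M f \<le> K"
    using ennreal_le_iff[OF K] by blast
qed

lemma set_integral_powr_Icc_0:
  fixes a t :: real
  assumes a: "a > -1" and t: "t \<ge> 0"
  shows "set_integrable lborel {0..t} (\<lambda>r. r powr a)"
    and "(LINT r:{0..t}|lborel. r powr a) = t powr (a + 1) / (a + 1)"
proof -
  have hi: "((\<lambda>r. r powr a) has_integral (t powr (a + 1) / (a + 1))) {0..t}"
    by (rule has_integral_powr_from_0[OF a t])
  then have "set_integrable lebesgue {0..t} (\<lambda>r. r powr a)"
    by (intro nonnegative_absolutely_integrable_1) (auto simp: integrable_on_def)
  moreover have "(\<lambda>r. indicator {0..t} r *\<^sub>R r powr a) \<in> borel_measurable lborel"
    by measurable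
  ultimately show si: "set_integrable lborel {0..t} (\<lambda>r. r powr a)"
    unfolding set_integrable_def by (simp add: integrable_completion)
  show "(LINT r:{0..t}|lborel. r powr a) = t powr (a + 1) / (a + 1)"
    using set_borel_integral_eq_integral(2)[OF si] hi integral_unique by metis
qed

section \<open>Riesz-type kernels on balls and their complements\<close>

lemma nn_integral_annulus_powr_le:
  fixes c :: "'a::euclidean_space" and b \<rho> :: real
  assumes b: "b \<ge> 0" and \<rho>: "\<rho> > 0"
  shows "(\<integral>\<^sup>+x. indicator {x. \<rho> \<le> norm (x - c) \<and> norm (x - c) \<le> 2 * \<rho>} x
            * ennreal (norm (x - c) powr -b) \<partial>lebesgue)
         \<le> ennreal (4 ^ DIM('a) * measure lborel (ball (0::'a) 1) * \<rho> powr (DIM('a) - b))"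
proof -
  have "(\<integral>\<^sup>+x. indicator {x. \<rho> \<le> norm (x - c) \<and> norm (x - c) \<le> 2 * \<rho>} x
            * ennreal (norm (x - c) powr -b) \<partial>lebesgue)
        \<le> (\<integral>\<^sup>+x. ennreal (\<rho> powr -b) * indicator (ball c (4 * \<rho>)) x \<partial>lebesgue)"
  proof (intro nn_integral_mono)
    fix x
    show "indicator {x. \<rho> \<le> norm (x - c) \<and> norm (x - c) \<le> 2 * \<rho>} x * ennreal (norm (x - c) powr -b)
         \<le> ennreal (\<rho> powr -b) * indicator (ball c (4 * \<rho>)) x"
    proof (cases "\<rho> \<le> norm (x - c) \<and> norm (x - c) \<le> 2 * \<rho>")
      case True
      then have "x \<in> ball c (4 * \<rho>)"
        using \<rho> by (simp add: dist_norm norm_minus_commute)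
      moreover have "norm (x - c) powr -b \<le> \<rho> powr -b"
        using True \<rho> b by (intro powr_mono2') auto
      ultimately show ?thesis
        using True by (simp add: indicator_def ennreal_leI)
    qed (auto simp: indicator_def)
  qed
  also have "\<dots> = ennreal (\<rho> powr -b) * emeasure lebesgue (ball c (4 * \<rho>))"
    by (rule nn_integral_cmult_indicator) simp
  also have "emeasure lebesgue (ball c (4 * \<rho>)) = ennreal ((4 * \<rho>) ^ DIM('a) * measure lborel (ball (0::'a) 1))"
    using emeasure_lborel_ball_finite[of c "4 * \<rho>"] content_ball_conv_unit_ball[of "4 * \<rho>" c] \<rho>
    by (simp add: emeasure_eq_ennreal_measure)
  also have "ennreal (\<rho> powr -b) * ennreal ((4 * \<rho>) ^ DIM('a) * measure lborel (ball (0::'a) 1))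
      = ennreal (4 ^ DIM('a) * measure lborel (ball (0::'a) 1) * \<rho> powr (DIM('a) - b))"
    using \<rho> by (simp add: ennreal_mult[symmetric] power_mult_distrib powr_realpow[symmetric]
        powr_diff powr_minus divide_inverse mult_ac)
  finally show ?thesis .
qed

lemma nn_integral_powr_dyadic_le:
  fixes c :: "'a::euclidean_space" and b \<rho> t :: real
  assumes b: "b \<ge> 0" and \<rho>: "\<rho> > 0" and t: "t > 0" "t powr (DIM('a) - b) < 1"
    and cover: "\<And>x. x \<in> A \<Longrightarrow> x \<noteq> c \<Longrightarrow>
      \<exists>k. \<rho> * t ^ k \<le> norm (x - c) \<and> norm (x - c) \<le> 2 * (\<rho> * t ^ k)"
  shows "(\<integral>\<^sup>+x. ennreal (indicator A x * norm (x - c) powr -b) \<partial>lebesgue)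
    \<le> ennreal (4 ^ DIM('a) * measure lborel (ball (0::'a) 1) * \<rho> powr (DIM('a) - b) / (1 - t powr (DIM('a) - b)))"
proof -
  define e where "e = DIM('a) - b"
  define V where "V = 4 ^ DIM('a) * measure lborel (ball (0::'a) 1)"
  define sh where "sh k = {x. \<rho> * t ^ k \<le> norm (x - c) \<and> norm (x - c) \<le> 2 * (\<rho> * t ^ k)}" for k
  define f where "f x = ennreal (norm (x - c) powr -b)" for x
  have V: "V \<ge> 0"
    by (simp add: V_def)
  have cover_sum: "ennreal (indicator A x * norm (x - c) powr -b) \<le> (\<Sum>k. indicator (sh k) x * f x)" for x
  proof (cases "x \<in> A \<and> x \<noteq> c")
    case True
    then obtain k where "x \<in> sh k"
      using cover by (auto simp: sh_def)
    then have "ennreal (indicator A x * norm (x - c) powr -b) = indicator (sh k) x * f x"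
      using True by (simp add: f_def)
    also have "\<dots> \<le> (\<Sum>k. indicator (sh k) x * f x)"
      by (metis ennreal_suminf_lessD less_irrefl not_le)
    finally show ?thesis .
  qed (auto simp: indicator_def)
  have "(\<integral>\<^sup>+x. ennreal (indicator A x * norm (x - c) powr -b) \<partial>lebesgue)
      \<le> (\<integral>\<^sup>+x. (\<Sum>k. indicator (sh k) x * f x) \<partial>lebesgue)"
    by (intro nn_integral_mono cover_sum)
  also have "\<dots> = (\<Sum>k. \<integral>\<^sup>+x. indicator (sh k) x * f x \<partial>lebesgue)"
    by (intro nn_integral_suminf measurable_completion) (simp add: sh_def f_def)
  also have "\<dots> \<le> (\<Sum>k. ennreal (V * \<rho> powr e * (t powr e) ^ k))"
  proof (intro suminf_le summableI)
    fix k
    have "(\<rho> * t ^ k) powr e = \<rho> powr e * (t powr e) ^ k"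
      using \<rho> t by (simp add: powr_mult powr_realpow[symmetric] powr_powr mult.commute)
    then show "(\<integral>\<^sup>+x. indicator (sh k) x * f x \<partial>lebesgue) \<le> ennreal (V * \<rho> powr e * (t powr e) ^ k)"
      using nn_integral_annulus_powr_le[OF b, of "\<rho> * t ^ k" c] \<rho> t
      by (simp add: sh_def f_def V_def e_def mult.assoc)
  qed
  also have "\<dots> = ennreal (\<Sum>k. V * \<rho> powr e * (t powr e) ^ k)"
    using t V by (intro suminf_ennreal2 summable_mult summable_geometric) (auto simp: e_def)
  also have "(\<Sum>k. V * \<rho> powr e * (t powr e) ^ k) = V * \<rho> powr e / (1 - t powr e)"
    using t by (simp add: suminf_mult suminf_geometric summable_geometric e_def)
  finally show ?thesis
    by (simp add: V_def e_def)
qed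

lemma ex_power_of_two_bracket:
  fixes q :: real
  assumes "q \<ge> 1"
  obtains k :: nat where "2 ^ k \<le> q" "q \<le> 2 ^ Suc k"
proof -
  obtain n where "q < 2 ^ n"
    using real_arch_pow[of 2 q] by auto
  moreover have "\<not> q < 2 ^ 0"
    using assms by simp
  ultimately obtain k where "\<not> q < 2 ^ k" "q < 2 ^ Suc k"
    using ex_least_nat_less[of "\<lambda>n. q < 2 ^ n"] by blast
  then show ?thesis
    by (intro that[of k]) auto
qed

lemma ball_powr_integral_bound:
  fixes a :: real
  assumes a: "0 < a" "a \<le> DIM('a::euclidean_space)"
  obtains C where "C \<ge> 0"
    "\<And>r (c::'a). r > 0 \<Longrightarrow> integrable lebesgue (\<lambda>x. indicator (ball c r) x * norm (x - c) powr (a - DIM('a)))"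
    "\<And>r (c::'a). r > 0 \<Longrightarrow>
       (\<integral>x. indicator (ball c r) x * norm (x - c) powr (a - DIM('a)) \<partial>lebesgue) \<le> C * r powr a"
proof -
  define C where "C = 4 ^ DIM('a) * measure lborel (ball (0::'a) 1) / (2 powr a - 1)"
  have "1 \<le> (2::real) powr a"
    using a by (intro ge_one_powr_ge_zero) auto
  then have C: "C \<ge> 0"
    unfolding C_def by (auto intro!: divide_nonneg_nonneg)
  have half: "(1 / 2 :: real) powr a < 1"
    using gr_one_powr[of 2 a] a by (simp add: powr_divide)
  have nn: "(\<integral>\<^sup>+x. ennreal (indicator (ball c r) x * norm (x - c) powr (a - DIM('a))) \<partial>lebesgue)
      \<le> ennreal (C * r powr a)" if r: "r > 0" for r and c :: 'a
  proof -
    have cover: "\<exists>k. r / 2 * (1 / 2) ^ k \<le> norm (x - c) \<and> norm (x - c) \<le> 2 * (r / 2 * (1 / 2) ^ k)"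
      if "x \<in> ball c r" "x \<noteq> c" for x
    proof -
      have y: "0 < norm (x - c)" "norm (x - c) < r"
        using that by (auto simp: dist_norm norm_minus_commute)
      then obtain k :: nat where k: "2 ^ k \<le> r / norm (x - c)" "r / norm (x - c) \<le> 2 ^ Suc k"
        using ex_power_of_two_bracket[of "r / norm (x - c)"] by auto
      then show ?thesis
        using y by (intro exI[of _ k]) (auto simp: field_simps power_one_over)
    qed
    have "(\<integral>\<^sup>+x. ennreal (indicator (ball c r) x * norm (x - c) powr (a - DIM('a))) \<partial>lebesgue)
      \<le> ennreal (4 ^ DIM('a) * measure lborel (ball (0::'a) 1) * (r / 2) powr a / (1 - (1 / 2) powr a))"
      using nn_integral_powr_dyadic_le[of "DIM('a) - a" "r / 2" "1 / 2" "ball c r" c] a r cover half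
      by simp
    also have "4 ^ DIM('a) * measure lborel (ball (0::'a) 1) * (r / 2) powr a / (1 - (1 / 2) powr a) = C * r powr a"
      using a r by (simp add: C_def powr_divide field_simps)
    finally show ?thesis .
  qed
  have m: "(\<lambda>x. indicator (ball c r) x * norm (x - c) powr (a - DIM('a))) \<in> borel_measurable lebesgue" for r and c :: 'a
    by (intro borel_measurable_times borel_measurable_indicator measurable_completion) auto
  show thesis
    using integrable_integral_le_of_nn_integral_le[OF m _ nn] C
    by (intro that[OF C]) (auto intro!: mult_nonneg_nonneg)
qed

lemma integrable_powr_outside_ball:
  fixes c :: "'a::euclidean_space" and a R :: real
  assumes a: "0 < a" and R: "0 < R"
  shows "integrable lebesgue (\<lambda>x. indicator {x. R < norm (x - c)} x * norm (x - c) powr -(DIM('a) + a))"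
proof (rule integrable_integral_le_of_nn_integral_le)
  have cover: "\<exists>k. R * 2 ^ k \<le> norm (x - c) \<and> norm (x - c) \<le> 2 * (R * 2 ^ k)"
    if x: "x \<in> {x. R < norm (x - c)}" for x
  proof -
    obtain k :: nat where "2 ^ k \<le> norm (x - c) / R" "norm (x - c) / R \<le> 2 ^ Suc k"
      using ex_power_of_two_bracket[of "norm (x - c) / R"] x R by auto
    then show ?thesis
      using R by (intro exI[of _ k]) (auto simp: field_simps)
  qed
  show "(\<integral>\<^sup>+x. ennreal (indicator {x. R < norm (x - c)} x * norm (x - c) powr -(DIM('a) + a)) \<partial>lebesgue)
      \<le> ennreal (4 ^ DIM('a) * measure lborel (ball (0::'a) 1) * R powr -a / (1 - 2 powr -a))"
    using nn_integral_powr_dyadic_le[of "DIM('a) + a" R 2 "{x. R < norm (x - c)}" c] a R cover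
    by (simp add: powr_less_one)
  show "0 \<le> 4 ^ DIM('a) * measure lborel (ball (0::'a) 1) * R powr -a / (1 - 2 powr -a)"
    using powr_less_one[of 2 "-a"] a by (auto intro!: divide_nonneg_nonneg)
  show "(\<lambda>x. indicator {x. R < norm (x - c)} x * norm (x - c) powr -(DIM('a) + a)) \<in> borel_measurable lebesgue"
    by (intro measurable_completion) simp
qed simp

section \<open>The radial profile of the Green function\<close>

definition Ginf_profile :: "real \<Rightarrow> real \<Rightarrow> real \<Rightarrow> real" where
  "Ginf_profile s N t = (LINT r:{0..t}|lborel. r powr (s - 1) / (r + 1) powr (N / 2))"

context
  fixes s N :: real
  assumes s: "0 < s" and N: "0 \<le> N"
begin

lemma Ginf_profile_integrand_le:
  assumes r: "r \<ge> 0"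
  shows "r powr (s - 1) / (r + 1) powr (N / 2) \<le> r powr (s - 1)"
proof -
  have "1 \<le> (r + 1) powr (N / 2)"
    using N r by (intro ge_one_powr_ge_zero) auto
  from divide_left_mono[OF this, of "r powr (s - 1)"] show ?thesis
    using r by simp
qed

lemma set_integrable_Ginf_profile_integrand:
  assumes t: "t \<ge> 0"
  shows "set_integrable lborel {0..t} (\<lambda>r. r powr (s - 1) / (r + 1) powr (N / 2))"
proof (rule set_integrable_bound[where f = "\<lambda>r. r powr (s - 1)"])
  show "set_integrable lborel {0..t} (\<lambda>r. r powr (s - 1))"
    using set_integral_powr_Icc_0(1)[of "s - 1" t] s t by simp
  show "set_borel_measurable lborel {0..t} (\<lambda>r. r powr (s - 1) / (r + 1) powr (N / 2))"
    unfolding set_borel_measurable_def by measurable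
  show "AE r in lborel. r \<in> {0..t} \<longrightarrow>
      norm (r powr (s - 1) / (r + 1) powr (N / 2)) \<le> norm (r powr (s - 1))"
  proof (intro AE_I2 impI)
    fix r :: real assume "r \<in> {0..t}"
    then show "norm (r powr (s - 1) / (r + 1) powr (N / 2)) \<le> norm (r powr (s - 1))"
      using Ginf_profile_integrand_le[of r] by simp
  qed
qed

lemma Ginf_profile_nonneg: "0 \<le> Ginf_profile s N t"
  unfolding Ginf_profile_def set_lebesgue_integral_def
  by (intro integral_nonneg_AE AE_I2) (simp split: split_indicator)

lemma Ginf_profile_le:
  assumes t: "t \<ge> 0"
  shows "Ginf_profile s N t \<le> t powr s / s"
proof -
  have "Ginf_profile s N t \<le> (LINT r:{0..t}|lborel. r powr (s - 1))"
    unfolding Ginf_profile_def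
  proof (rule set_integral_mono)
    show "set_integrable lborel {0..t} (\<lambda>r. r powr (s - 1))"
      using set_integral_powr_Icc_0(1)[of "s - 1" t] s t by simp
  qed (use t set_integrable_Ginf_profile_integrand Ginf_profile_integrand_le in auto)
  also have "\<dots> = t powr s / s"
    using set_integral_powr_Icc_0(2)[of "s - 1" t] s t by simp
  finally show ?thesis .
qed

lemma Ginf_profile_le_half_power:
  assumes sN: "s \<le> N" and t: "t \<ge> 0"
  shows "Ginf_profile s N t \<le> t powr (s / 2) / (s / 2)"
proof -
  have le: "r powr (s - 1) / (r + 1) powr (N / 2) \<le> r powr (s / 2 - 1)" if r: "0 \<le> r" for r
  proof (cases "r = 0")
    case False
    have "r powr (s / 2) \<le> (r + 1) powr (s / 2)"
      using r s by (intro powr_mono2) auto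
    also have "\<dots> \<le> (r + 1) powr (N / 2)"
      using r sN by (intro powr_mono) auto
    finally have "r powr (s - 1) / (r + 1) powr (N / 2) \<le> r powr (s - 1) / r powr (s / 2)"
      using False r by (intro divide_left_mono mult_pos_pos) auto
    also have "\<dots> = r powr (s / 2 - 1)"
      using False r by (simp add: powr_diff[symmetric])
    finally show ?thesis .
  qed simp
  have "Ginf_profile s N t \<le> (LINT r:{0..t}|lborel. r powr (s / 2 - 1))"
    unfolding Ginf_profile_def
  proof (rule set_integral_mono)
    show "set_integrable lborel {0..t} (\<lambda>r. r powr (s / 2 - 1))"
      using set_integral_powr_Icc_0(1)[of "s / 2 - 1" t] s t by simp
  qed (use t set_integrable_Ginf_profile_integrand le in auto)
  also have "\<dots> = t powr (s / 2) / (s / 2)"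
    using set_integral_powr_Icc_0(2)[of "s / 2 - 1" t] s t by simp
  finally show ?thesis .
qed

lemma Ginf_profile_ge:
  assumes t: "t \<ge> 0"
  shows "t powr s / s / (t + 1) powr (N / 2) \<le> Ginf_profile s N t"
proof -
  have "t powr s / s / (t + 1) powr (N / 2) = (LINT r:{0..t}|lborel. r powr (s - 1) / (t + 1) powr (N / 2))"
    using set_integral_powr_Icc_0(2)[of "s - 1" t] s t by simp
  also have "\<dots> \<le> Ginf_profile s N t"
    unfolding Ginf_profile_def
  proof (rule set_integral_mono)
    show "set_integrable lborel {0..t} (\<lambda>r. r powr (s - 1) / (t + 1) powr (N / 2))"
      using set_integral_powr_Icc_0(1)[of "s - 1" t] s t by simp
    show "set_integrable lborel {0..t} (\<lambda>r. r powr (s - 1) / (r + 1) powr (N / 2))"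
      by (rule set_integrable_Ginf_profile_integrand[OF t])
    fix r assume "r \<in> {0..t}"
    then have "(r + 1) powr (N / 2) \<le> (t + 1) powr (N / 2)"
      using N by (intro powr_mono2) auto
    moreover have "0 < (t + 1) powr (N / 2) * (r + 1) powr (N / 2)"
      using \<open>r \<in> {0..t}\<close> by (intro mult_pos_pos) auto
    ultimately show "r powr (s - 1) / (t + 1) powr (N / 2) \<le> r powr (s - 1) / (r + 1) powr (N / 2)"
      by (intro divide_left_mono) auto
  qed
  finally show ?thesis .
qed

lemma mono_Ginf_profile: "mono (Ginf_profile s N)"
proof
  fix t t' :: real
  assume tt': "t \<le> t'"
  show "Ginf_profile s N t \<le> Ginf_profile s N t'"
  proof (cases "t < 0")
    case True
    then show ?thesis
      using Ginf_profile_nonneg[of t'] by (simp add: Ginf_profile_def set_lebesgue_integral_def)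
  next
    case False
    have "integrable lborel (\<lambda>r. indicator {0..t} r * (r powr (s - 1) / (r + 1) powr (N / 2)))"
      using set_integrable_Ginf_profile_integrand[of t] False by (simp add: set_integrable_def)
    moreover have "integrable lborel (\<lambda>r. indicator {0..t'} r * (r powr (s - 1) / (r + 1) powr (N / 2)))"
      using set_integrable_Ginf_profile_integrand[of t'] False tt' by (simp add: set_integrable_def)
    ultimately show ?thesis
      unfolding Ginf_profile_def set_lebesgue_integral_def
      using tt' by (intro integral_mono) (auto simp: indicator_def)
  qed
qed

lemma borel_measurable_Ginf_profile: "Ginf_profile s N \<in> borel_measurable borel"
  using mono_Ginf_profile borel_measurable_mono by blast

end

lemma powr_profile_bound_eq:
  fixes \<epsilon> x1 d k p s N :: real
  assumes \<epsilon>: "\<epsilon> > 0" and x1: "x1 > 0" and d: "d > 0"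
  shows "\<epsilon> powr -s * (k / 2 * d powr (2 * s - N) * ((4 * x1 * \<epsilon> / d\<^sup>2) powr p / p))
    = k * 4 powr p / (2 * p) * x1 powr p * \<epsilon> powr (p - s) * d powr (2 * s - 2 * p - N)"
proof -
  have frac: "(4 * x1 * \<epsilon> / d\<^sup>2) powr p = 4 powr p * x1 powr p * \<epsilon> powr p / d powr (2 * p)"
    using \<epsilon> x1 d by (simp add: powr_divide powr_mult power2_powr)
  have "\<epsilon> powr -s * (k / 2 * d powr (2 * s - N) * ((4 * x1 * \<epsilon> / d\<^sup>2) powr p / p))
    = k * 4 powr p / (2 * p) * x1 powr p * (\<epsilon> powr -s * \<epsilon> powr p) * (d powr (2 * s - N) / d powr (2 * p))"
    unfolding frac by (simp only: divide_inverse inverse_mult_distrib mult_ac)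
  also have "\<epsilon> powr -s * \<epsilon> powr p = \<epsilon> powr (p - s)"
    by (simp add: powr_add[symmetric])
  also have "d powr (2 * s - N) / d powr (2 * p) = d powr (2 * s - 2 * p - N)"
    using d by (simp add: powr_diff[symmetric] algebra_simps)
  finally show ?thesis .
qed

section \<open>The rescaled Green function on the half space\<close>

text \<open>Declared only at this point: as a measurability rule it derails the \<open>measurable\<close>
  method on goals over \<open>lborel\<close>.\<close>

lemma measurable_ident_lebesgue_borel [measurable]:
  "(\<lambda>x. x) \<in> (lebesgue :: 'a::euclidean_space measure) \<rightarrow>\<^sub>M borel"
  by (intro measurable_completion) (simp add: measurable_lborel1)

lemma sets_cball [measurable]: "cball c r \<in> sets borel"
  by (simp add: borel_closed)

lemma open_halfsp: "open (halfsp i)"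
  unfolding halfsp_def by (intro open_Collect_less continuous_intros)

lemma sets_halfsp [measurable]: "halfsp i \<in> sets borel"
  by (rule borel_open[OF open_halfsp])

lemma borel_measurable_frac_lap_eps:
  fixes \<phi> :: "real^'n::finite \<Rightarrow> real"
  assumes \<phi>: "continuous_on UNIV \<phi>"
  shows "frac_lap_eps s \<epsilon> \<phi> \<in> borel_measurable lebesgue"
proof -
  define A where "A = ball (0::real^'n) (1 / \<epsilon>) - ball 0 \<epsilon>"
  define F where "F x z = indicator A z * ((\<phi> x - \<phi> (x + z)) / norm z powr (real CARD('n) + 2 * s))"
    for x z :: "real^'n"
  have A: "A \<in> sets borel"
    unfolding A_def by simp
  have "(\<lambda>p. \<phi> (fst p) - \<phi> (fst p + snd p)) \<in> borel_measurable (borel :: ((real^'n) \<times> (real^'n)) measure)"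
    by (intro borel_measurable_continuous_onI continuous_intros continuous_on_compose2[OF \<phi>]) auto
  moreover have "(\<lambda>p. norm (snd p) powr (real CARD('n) + 2 * s))
      \<in> borel_measurable (borel :: ((real^'n) \<times> (real^'n)) measure)"
    by (intro powr_real_measurable borel_measurable_continuous_onI continuous_intros)
  moreover have "(\<lambda>p. indicator A (snd p) :: real) \<in> borel_measurable (borel :: ((real^'n) \<times> (real^'n)) measure)"
    by (intro measurable_compose[OF _ borel_measurable_indicator[OF A]] borel_measurable_continuous_onI
        continuous_intros)
  ultimately have "case_prod F \<in> borel_measurable borel"
    unfolding F_def case_prod_beta' by (intro borel_measurable_times borel_measurable_divide)
  then have F: "case_prod F \<in> borel_measurable (lborel \<Otimes>\<^sub>M lborel)"
    by (simp add: lborel_prod measurable_lborel1)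
  have F_x: "F x \<in> borel_measurable lborel" for x
    using measurable_Pair2[OF F, of x] by simp
  have "frac_lap_eps s \<epsilon> \<phi> x = cNs CARD('n) s * (\<integral>z. F x z \<partial>lborel)" for x
    using integral_completion[OF F_x[of x]]
    unfolding frac_lap_eps_def set_lebesgue_integral_def F_def A_def by simp
  then have "frac_lap_eps s \<epsilon> \<phi> = (\<lambda>x. cNs CARD('n) s * (\<integral>z. F x z \<partial>lborel))"
    by (simp add: fun_eq_iff)
  moreover have "(\<lambda>x. cNs CARD('n) s * (\<integral>z. F x z \<partial>lborel)) \<in> borel_measurable lebesgue"
    using lborel.borel_measurable_lebesgue_integral[OF F]
    by (intro borel_measurable_times borel_measurable_const measurable_completion) auto
  ultimately show ?thesis
    by simp
qed

locale halfspace_green =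
  fixes i1 :: "'n::finite" and s :: real
  assumes s_pos: "0 < s" and s_less_1: "s < 1" and two_s_le_N: "2 * s \<le> real CARD('n)"
begin

abbreviation e1 :: "real^'n" where "e1 \<equiv> axis i1 1"

definition Gscaled :: "real \<Rightarrow> real^'n \<Rightarrow> real" where
  "Gscaled \<epsilon> x = \<epsilon> powr -s * Ginf i1 s x (\<epsilon> *\<^sub>R e1)"

lemma kappa_pos: "0 < kappa CARD('n) s"
  using s_pos s_less_1 by (simp add: kappa_def sin_gt_zero Gamma_real_pos)

lemma Kcal_eq: "Kcal CARD('n) s = kappa CARD('n) s * 4 powr s / (2 * s)"
proof -
  have "(4::real) powr s = 2 powr (2 * s)"
    using power2_powr[of 2 s] by simp
  also have "\<dots> = 2 * 2 powr (2 * s - 1)"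
    by (simp add: powr_diff)
  finally have "(4::real) powr s = 2 * 2 powr (2 * s - 1)" .
  then show ?thesis
    by (simp add: Kcal_def)
qed

lemma Kcal_pos: "0 < Kcal CARD('n) s"
  using kappa_pos s_pos by (simp add: Kcal_eq)

lemma Pcal_eq: "Pcal i1 s x = Kcal CARD('n) s * x $ i1 powr s * norm x powr - real CARD('n)"
  by (simp add: Pcal_def mult_ac)

lemma Pcal_nonneg: "0 \<le> Pcal i1 s x"
  using Kcal_pos by (simp add: Pcal_eq)

lemma Pcal_le:
  assumes "x \<in> halfsp i1"
  shows "Pcal i1 s x \<le> Kcal CARD('n) s * norm x powr (s - real CARD('n))"
proof -
  have "x $ i1 powr s \<le> norm x powr s"
    using assms vec_nth_le_norm[of x i1] s_pos by (intro powr_mono2) (auto simp: halfsp_def)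
  then have "Pcal i1 s x \<le> Kcal CARD('n) s * norm x powr s * norm x powr - real CARD('n)"
    unfolding Pcal_eq using Kcal_pos by (intro mult_right_mono mult_left_mono) auto
  also have "\<dots> = Kcal CARD('n) s * norm x powr (s - real CARD('n))"
    by (simp add: powr_add[symmetric])
  finally show ?thesis .
qed

lemma borel_measurable_Pcal [measurable]: "Pcal i1 s \<in> borel_measurable borel"
  unfolding Pcal_eq[abs_def] by measurable

lemma Gscaled_eq:
  "Gscaled \<epsilon> x = \<epsilon> powr -s * (kappa CARD('n) s / 2 * norm (x - \<epsilon> *\<^sub>R e1) powr (2 * s - real CARD('n))
     * Ginf_profile s (real CARD('n)) (4 * x $ i1 * \<epsilon> / (norm (x - \<epsilon> *\<^sub>R e1))\<^sup>2))"
  by (simp add: Gscaled_def Ginf_def Ginf_profile_def)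

lemma borel_measurable_Gscaled [measurable]: "Gscaled \<epsilon> \<in> borel_measurable borel"
proof -
  have "(\<lambda>x. 4 * x $ i1 * \<epsilon> / (norm (x - \<epsilon> *\<^sub>R e1))\<^sup>2) \<in> borel_measurable borel"
    by measurable
  then have "(\<lambda>x. Ginf_profile s (real CARD('n)) (4 * x $ i1 * \<epsilon> / (norm (x - \<epsilon> *\<^sub>R e1))\<^sup>2))
      \<in> borel_measurable borel"
    using s_pos by (intro measurable_compose[OF _ borel_measurable_Ginf_profile]) auto
  then show ?thesis
    unfolding Gscaled_eq[abs_def] by measurable
qed

lemma Gscaled_nonneg: "\<epsilon> > 0 \<Longrightarrow> 0 \<le> Gscaled \<epsilon> x"
  using kappa_pos Ginf_profile_nonneg[OF s_pos] by (simp add: Gscaled_eq)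

lemma Gscaled_le:
  assumes \<epsilon>: "\<epsilon> > 0" and x: "x $ i1 > 0"
  shows "Gscaled \<epsilon> x \<le> Kcal CARD('n) s * x $ i1 powr s * norm (x - \<epsilon> *\<^sub>R e1) powr - real CARD('n)"
proof (cases "x = \<epsilon> *\<^sub>R e1")
  case False
  define d where "d = norm (x - \<epsilon> *\<^sub>R e1)"
  have d: "d > 0"
    using False by (simp add: d_def)
  have "Gscaled \<epsilon> x \<le> \<epsilon> powr -s * (kappa CARD('n) s / 2 * d powr (2 * s - real CARD('n)) * ((4 * x $ i1 * \<epsilon> / d\<^sup>2) powr s / s))"
    unfolding Gscaled_eq d_def[symmetric] using kappa_pos \<epsilon> x d s_pos
    by (intro mult_left_mono Ginf_profile_le) auto
  also have "\<dots> = Kcal CARD('n) s * x $ i1 powr s * d powr - real CARD('n)"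
    using powr_profile_bound_eq[OF \<epsilon> x d, where k = "kappa CARD('n) s" and p = s and s = s and N = "real CARD('n)"] \<epsilon> by (simp add: Kcal_eq)
  finally show ?thesis
    by (simp add: d_def)
qed (simp add: Gscaled_eq)

lemma norm_add_e1_sq: "(norm (x + \<epsilon> *\<^sub>R e1))\<^sup>2 = (norm (x - \<epsilon> *\<^sub>R e1))\<^sup>2 + 4 * \<epsilon> * x $ i1"
  by (simp add: power2_norm_eq_inner inner_add_left inner_add_right inner_diff_left inner_diff_right
      inner_axis inner_commute algebra_simps)

text \<open>Here \<open>|x + \<epsilon> e1|\<^sup>2 = |x - \<epsilon> e1|\<^sup>2 (1 + t)\<close> with \<open>t\<close> the upper limit of the
  profile integral, so the lower bound on the profile turns into the reflected kernel.\<close>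

lemma Gscaled_ge:
  assumes \<epsilon>: "\<epsilon> > 0" and x: "x $ i1 > 0" and ne: "x \<noteq> \<epsilon> *\<^sub>R e1"
  shows "Kcal CARD('n) s * x $ i1 powr s * norm (x + \<epsilon> *\<^sub>R e1) powr - real CARD('n) \<le> Gscaled \<epsilon> x"
proof -
  define d where "d = norm (x - \<epsilon> *\<^sub>R e1)"
  have d: "d > 0"
    using ne by (simp add: d_def)
  define t where "t = 4 * x $ i1 * \<epsilon> / d\<^sup>2"
  have t: "t \<ge> 0"
    using \<epsilon> x by (simp add: t_def)
  have eqK: "\<epsilon> powr -s * (kappa CARD('n) s / 2 * d powr (2 * s - real CARD('n)) * (t powr s / s))
      = Kcal CARD('n) s * x $ i1 powr s * d powr - real CARD('n)"
    using powr_profile_bound_eq[OF \<epsilon> x d, where k = "kappa CARD('n) s" and p = s and s = s and N = "real CARD('n)"] \<epsilon>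
    by (simp add: Kcal_eq t_def)
  have "(norm (x + \<epsilon> *\<^sub>R e1))\<^sup>2 = d\<^sup>2 * (t + 1)"
    using d by (simp add: norm_add_e1_sq t_def d_def[symmetric] algebra_simps)
  then have "norm (x + \<epsilon> *\<^sub>R e1) powr - real CARD('n) = (d\<^sup>2 * (t + 1)) powr (- real CARD('n) / 2)"
    using power2_powr[of "norm (x + \<epsilon> *\<^sub>R e1)" "- real CARD('n) / 2"] by simp
  also have "\<dots> = (d\<^sup>2) powr (- real CARD('n) / 2) * (t + 1) powr (- real CARD('n) / 2)"
    using t by (simp add: powr_mult)
  also have "(d\<^sup>2) powr (- real CARD('n) / 2) = d powr - real CARD('n)"
    using power2_powr[of d "- real CARD('n) / 2"] d by simp
  also have "(t + 1) powr (- real CARD('n) / 2) = 1 / (t + 1) powr (real CARD('n) / 2)"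
    using powr_minus_divide[of "t + 1" "real CARD('n) / 2"] by simp
  finally have "Kcal CARD('n) s * x $ i1 powr s * norm (x + \<epsilon> *\<^sub>R e1) powr - real CARD('n)
      = Kcal CARD('n) s * x $ i1 powr s * d powr - real CARD('n) / (t + 1) powr (real CARD('n) / 2)"
    by simp
  also have "Kcal CARD('n) s * x $ i1 powr s * d powr - real CARD('n)
      = \<epsilon> powr -s * (kappa CARD('n) s / 2 * d powr (2 * s - real CARD('n)) * (t powr s / s))"
    by (rule eqK[symmetric])
  also have "\<epsilon> powr -s * (kappa CARD('n) s / 2 * d powr (2 * s - real CARD('n)) * (t powr s / s))
      / (t + 1) powr (real CARD('n) / 2)
      = \<epsilon> powr -s * (kappa CARD('n) s / 2 * d powr (2 * s - real CARD('n))
        * (t powr s / s / (t + 1) powr (real CARD('n) / 2)))"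
    by simp
  also have "\<dots> \<le> Gscaled \<epsilon> x"
    unfolding Gscaled_eq d_def[symmetric] t_def[symmetric] using kappa_pos s_pos t
    by (intro mult_left_mono Ginf_profile_ge) auto
  finally show ?thesis .
qed

lemma Gscaled_le_near:
  assumes \<epsilon>: "\<epsilon> > 0" and x: "x $ i1 > 0"
  shows "Gscaled \<epsilon> x \<le> kappa CARD('n) s * 2 powr s / s * \<epsilon> powr (-s / 2) * x $ i1 powr (s / 2)
    * norm (x - \<epsilon> *\<^sub>R e1) powr (s - real CARD('n))"
proof (cases "x = \<epsilon> *\<^sub>R e1")
  case False
  define d where "d = norm (x - \<epsilon> *\<^sub>R e1)"
  have d: "d > 0"
    using False by (simp add: d_def)
  have "Gscaled \<epsilon> x
      \<le> \<epsilon> powr -s * (kappa CARD('n) s / 2 * d powr (2 * s - real CARD('n)) * ((4 * x $ i1 * \<epsilon> / d\<^sup>2) powr (s / 2) / (s / 2)))"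
    unfolding Gscaled_eq d_def[symmetric] using kappa_pos \<epsilon> x d s_pos two_s_le_N
    by (intro mult_left_mono Ginf_profile_le_half_power) auto
  also have "\<dots> = kappa CARD('n) s * 4 powr (s / 2) / (2 * (s / 2)) * x $ i1 powr (s / 2)
      * \<epsilon> powr (s / 2 - s) * d powr (2 * s - 2 * (s / 2) - real CARD('n))"
    by (rule powr_profile_bound_eq[OF \<epsilon> x d])
  also have "\<dots> = kappa CARD('n) s * 2 powr s / s * \<epsilon> powr (-s / 2) * x $ i1 powr (s / 2) * d powr (s - real CARD('n))"
    using power2_powr[of 2 "s / 2"] by (simp add: mult_ac)
  finally show ?thesis
    by (simp add: d_def)
qed (simp add: Gscaled_eq)

lemma continuous_on_norm_powr_halfsp: "continuous_on (halfsp i1) (\<lambda>x::real^'n. norm x powr - real CARD('n))"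
  by (intro continuous_intros) (auto simp: halfsp_def)

lemma uniform_limit_Pcal_shift:
  assumes K: "compact K" "K \<subseteq> halfsp i1"
  shows "uniform_limit K
    (\<lambda>\<epsilon> x. Kcal CARD('n) s * x $ i1 powr s * norm (x + \<epsilon> *\<^sub>R v) powr - real CARD('n))
    (Pcal i1 s) (at_right 0)"
proof -
  have "\<forall>x\<in>K. x $ i1 \<noteq> 0"
    using K(2) by (auto simp: halfsp_def)
  then have bounded: "bounded ((\<lambda>x. Kcal CARD('n) s * x $ i1 powr s) ` K)"
      "bounded ((\<lambda>x. norm x powr - real CARD('n)) ` K)"
    using K(1) continuous_on_subset[OF continuous_on_norm_powr_halfsp K(2)]
    by (auto intro!: compact_imp_bounded compact_continuous_image continuous_intros)
  have "uniform_limit K (\<lambda>\<epsilon> x. norm (x + \<epsilon> *\<^sub>R v) powr - real CARD('n))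
      (\<lambda>x. norm x powr - real CARD('n)) (at 0)"
    by (rule uniform_limit_translate[OF K open_halfsp continuous_on_norm_powr_halfsp])
  then have "uniform_limit K (\<lambda>\<epsilon> x. norm (x + \<epsilon> *\<^sub>R v) powr - real CARD('n))
      (\<lambda>x. norm x powr - real CARD('n)) (at_right 0)"
    by (rule filterlim_mono) (simp_all add: at_le)
  from uniform_lim_mult[OF uniform_limit_const this bounded] show ?thesis
    by (simp add: Pcal_eq[abs_def])
qed

lemma uniform_limit_Gscaled:
  assumes K: "compact K" "K \<subseteq> halfsp i1"
  shows "uniform_limit K Gscaled (Pcal i1 s) (at_right 0)"
proof (rule uniform_limit_sandwich[OF uniform_limit_Pcal_shift[OF K, of e1] uniform_limit_Pcal_shift[OF K, of "-e1"]])
  have "0 \<notin> K"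
    using K(2) by (auto simp: halfsp_def)
  then obtain \<delta> where \<delta>: "\<delta> > 0" "\<And>x. x \<in> K \<Longrightarrow> \<delta> \<le> norm x"
    using separate_point_closed[OF compact_imp_closed[OF K(1)], of 0] by (auto simp: dist_norm)
  have "\<forall>\<^sub>F \<epsilon> in at_right 0. 0 < \<epsilon> \<and> \<epsilon> < \<delta>"
    using \<delta>(1) by (intro eventually_conj eventually_at_right_less order_tendstoD(2)[OF tendsto_ident_at])
  then show "\<forall>\<^sub>F \<epsilon> in at_right 0. \<forall>x\<in>K.
      Kcal CARD('n) s * x $ i1 powr s * norm (x + \<epsilon> *\<^sub>R e1) powr - real CARD('n) \<le> Gscaled \<epsilon> x
      \<and> Gscaled \<epsilon> x \<le> Kcal CARD('n) s * x $ i1 powr s * norm (x + \<epsilon> *\<^sub>R - e1) powr - real CARD('n)"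
  proof eventually_elim
    case (elim \<epsilon>)
    show ?case
    proof
      fix x assume x: "x \<in> K"
      then have x1: "x $ i1 > 0"
        using K(2) by (auto simp: halfsp_def)
      have "x \<noteq> \<epsilon> *\<^sub>R e1"
        using \<delta>(2)[OF x] elim by auto
      then show "Kcal CARD('n) s * x $ i1 powr s * norm (x + \<epsilon> *\<^sub>R e1) powr - real CARD('n) \<le> Gscaled \<epsilon> x
        \<and> Gscaled \<epsilon> x \<le> Kcal CARD('n) s * x $ i1 powr s * norm (x + \<epsilon> *\<^sub>R - e1) powr - real CARD('n)"
        using Gscaled_ge[OF _ x1] Gscaled_le[OF _ x1] elim by simp
    qed
  qed
qed

lemma tendsto_Gscaled: "x \<in> halfsp i1 \<Longrightarrow> ((\<lambda>\<epsilon>. Gscaled \<epsilon> x) \<longlongrightarrow> Pcal i1 s x) (at_right 0)"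
  using tendsto_uniform_limitI[OF uniform_limit_Gscaled[of "{x}"]] by auto

lemma Gscaled_diff_le_near:
  assumes \<epsilon>: "\<epsilon> > 0" and x: "x \<in> halfsp i1" and near: "norm x \<le> 3 * \<epsilon>"
  shows "\<bar>Gscaled \<epsilon> x - Pcal i1 s x\<bar>
    \<le> kappa CARD('n) s * 2 powr s / s * 3 powr (s / 2) * norm (x - \<epsilon> *\<^sub>R e1) powr (s - real CARD('n))
      + Kcal CARD('n) s * norm x powr (s - real CARD('n))"
proof -
  have x1: "x $ i1 > 0"
    using x by (simp add: halfsp_def)
  have "\<epsilon> powr (-s / 2) * x $ i1 powr (s / 2) \<le> \<epsilon> powr (-s / 2) * (3 * \<epsilon>) powr (s / 2)"
    using x1 vec_nth_le_norm[of x i1] near s_pos by (intro mult_left_mono powr_mono2) auto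
  also have "\<dots> = 3 powr (s / 2)"
    using \<epsilon> by (simp add: powr_mult powr_add[symmetric])
  finally have scale: "\<epsilon> powr (-s / 2) * x $ i1 powr (s / 2) \<le> 3 powr (s / 2)" .
  have "Gscaled \<epsilon> x \<le> kappa CARD('n) s * 2 powr s / s * (\<epsilon> powr (-s / 2) * x $ i1 powr (s / 2))
      * norm (x - \<epsilon> *\<^sub>R e1) powr (s - real CARD('n))"
    using Gscaled_le_near[OF \<epsilon> x1] by (simp add: mult.assoc)
  also have "\<dots> \<le> kappa CARD('n) s * 2 powr s / s * 3 powr (s / 2) * norm (x - \<epsilon> *\<^sub>R e1) powr (s - real CARD('n))"
    using scale kappa_pos s_pos by (intro mult_right_mono mult_left_mono) auto
  finally have "Gscaled \<epsilon> x \<le> kappa CARD('n) s * 2 powr s / s * 3 powr (s / 2)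
      * norm (x - \<epsilon> *\<^sub>R e1) powr (s - real CARD('n))" .
  then show ?thesis
    using Gscaled_nonneg[OF \<epsilon>, of x] Pcal_nonneg[of x] Pcal_le[OF x] by linarith
qed

lemma Gscaled_diff_le_far:
  assumes \<epsilon>: "\<epsilon> > 0" and x: "x \<in> halfsp i1" and far: "3 * \<epsilon> < norm x"
  shows "\<bar>Gscaled \<epsilon> x - Pcal i1 s x\<bar> \<le> ((2 / 3) powr - real CARD('n) + 1) * Pcal i1 s x"
proof -
  have x1: "x $ i1 > 0"
    using x by (simp add: halfsp_def)
  have "2 / 3 * norm x \<le> norm (x - \<epsilon> *\<^sub>R e1)"
    using norm_triangle_ineq2[of x "\<epsilon> *\<^sub>R e1"] \<epsilon> far by simp
  then have "norm (x - \<epsilon> *\<^sub>R e1) powr - real CARD('n) \<le> (2 / 3 * norm x) powr - real CARD('n)"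
    using far \<epsilon> by (intro powr_mono2') auto
  also have "\<dots> = (2 / 3) powr - real CARD('n) * norm x powr - real CARD('n)"
    using powr_mult[of "2 / 3" "norm x" "- real CARD('n)"] by simp
  finally have dist: "norm (x - \<epsilon> *\<^sub>R e1) powr - real CARD('n)
      \<le> (2 / 3) powr - real CARD('n) * norm x powr - real CARD('n)" .
  have "Gscaled \<epsilon> x \<le> Kcal CARD('n) s * x $ i1 powr s * norm (x - \<epsilon> *\<^sub>R e1) powr - real CARD('n)"
    by (rule Gscaled_le[OF \<epsilon> x1])
  also have "\<dots> \<le> Kcal CARD('n) s * x $ i1 powr s * ((2 / 3) powr - real CARD('n) * norm x powr - real CARD('n))"
    using dist Kcal_pos by (intro mult_left_mono) auto
  also have "\<dots> = (2 / 3) powr - real CARD('n) * Pcal i1 s x"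
    by (simp add: Pcal_eq mult_ac)
  finally show ?thesis
    using Gscaled_nonneg[OF \<epsilon>, of x] Pcal_nonneg[of x] by (simp add: abs_le_iff algebra_simps)
qed

lemma set_integrable_Pcal_mult:
  assumes qm: "q \<in> borel_measurable lebesgue"
    and qB: "AE x in lebesgue. x \<in> halfsp i1 \<longrightarrow> \<bar>q x\<bar> \<le> B"
    and tail: "set_integrable lebesgue (halfsp i1 \<inter> {x. 1 < norm x}) (\<lambda>x. Pcal i1 s x * q x)"
  shows "set_integrable lebesgue (halfsp i1) (\<lambda>x. Pcal i1 s x * q x)"
proof -
  define f where "f x = \<bar>B\<bar> * Kcal CARD('n) s * (indicator (ball 0 2) x * norm x powr (s - real CARD('n)))"
    for x :: "real^'n"
  obtain C where int: "\<And>r (c::real^'n). r > 0 \<Longrightarrow>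
      integrable lebesgue (\<lambda>x. indicator (ball c r) x * norm (x - c) powr (s - DIM(real^'n)))"
    using ball_powr_integral_bound[where 'a = "real^'n", of s] s_pos two_s_le_N by auto
  have "integrable lebesgue (\<lambda>x. indicator (ball (0::real^'n) 2) x * norm x powr (s - real CARD('n)))"
    using int[of 2 0] by simp
  then have "integrable lebesgue f"
    unfolding f_def by (intro integrable_mult_right)
  then have "set_integrable lebesgue (halfsp i1 - {x. 1 < norm x}) f"
    unfolding set_integrable_def by (intro integrable_mult_indicator) auto
  then have "set_integrable lebesgue (halfsp i1 - {x. 1 < norm x}) (\<lambda>x. Pcal i1 s x * q x)"
  proof (rule set_integrable_bound)
    show "set_borel_measurable lebesgue (halfsp i1 - {x. 1 < norm x}) (\<lambda>x. Pcal i1 s x * q x)"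
      using qm unfolding set_borel_measurable_def by measurable
    show "AE x in lebesgue. x \<in> halfsp i1 - {x. 1 < norm x} \<longrightarrow> norm (Pcal i1 s x * q x) \<le> norm (f x)"
      using qB
    proof eventually_elim
      case (elim x)
      show ?case
      proof
        assume x: "x \<in> halfsp i1 - {x. 1 < norm x}"
        then have "\<bar>Pcal i1 s x * q x\<bar> \<le> Kcal CARD('n) s * norm x powr (s - real CARD('n)) * \<bar>B\<bar>"
          using elim Pcal_le[of x] Pcal_nonneg[of x] by (auto simp: abs_mult intro!: mult_mono)
        then show "norm (Pcal i1 s x * q x) \<le> norm (f x)"
          using x Kcal_pos by (simp add: f_def abs_mult mult_ac)
      qed
    qed
  qed
  from set_integrable_Un[OF this tail] show ?thesis
    by (simp add: Un_Diff_Int)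
qed

definition Gscaled_near_bound :: "real \<Rightarrow> real^'n \<Rightarrow> real" where
  "Gscaled_near_bound \<epsilon> x =
     kappa CARD('n) s * 2 powr s / s * 3 powr (s / 2)
       * (indicator (ball (\<epsilon> *\<^sub>R e1) (5 * \<epsilon>)) x * norm (x - \<epsilon> *\<^sub>R e1) powr (s - real CARD('n)))
     + Kcal CARD('n) s * (indicator (ball 0 (5 * \<epsilon>)) x * norm x powr (s - real CARD('n)))"

lemma Gscaled_near_bound_nonneg: "0 \<le> Gscaled_near_bound \<epsilon> x"
  using kappa_pos Kcal_pos s_pos by (simp add: Gscaled_near_bound_def)

lemma Gscaled_diff_le_near_bound:
  assumes \<epsilon>: "\<epsilon> > 0" and x: "x \<in> halfsp i1 \<inter> cball 0 (3 * \<epsilon>)"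
  shows "\<bar>Gscaled \<epsilon> x - Pcal i1 s x\<bar> \<le> Gscaled_near_bound \<epsilon> x"
proof -
  have "norm (\<epsilon> *\<^sub>R e1 - x) \<le> \<epsilon> + norm x"
    using norm_triangle_ineq4[of "\<epsilon> *\<^sub>R e1" x] \<epsilon> by simp
  then have "x \<in> ball (\<epsilon> *\<^sub>R e1) (5 * \<epsilon>)" "x \<in> ball 0 (5 * \<epsilon>)"
    using x \<epsilon> by (auto simp: dist_norm)
  then show ?thesis
    using Gscaled_diff_le_near[OF \<epsilon>, of x] x by (simp add: Gscaled_near_bound_def)
qed

lemma Gscaled_near_bound_integral:
  obtains C where "\<And>\<epsilon>. \<epsilon> > 0 \<Longrightarrow> integrable lebesgue (Gscaled_near_bound \<epsilon>)"
    "\<And>\<epsilon>. \<epsilon> > 0 \<Longrightarrow> integral\<^sup>L lebesgue (Gscaled_near_bound \<epsilon>) \<le> C * \<epsilon> powr s"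
proof -
  obtain Cb where "Cb \<ge> 0"
    and int: "\<And>r (c::real^'n). r > 0 \<Longrightarrow>
      integrable lebesgue (\<lambda>x. indicator (ball c r) x * norm (x - c) powr (s - DIM(real^'n)))"
    and le: "\<And>r (c::real^'n). r > 0 \<Longrightarrow>
      (\<integral>x. indicator (ball c r) x * norm (x - c) powr (s - DIM(real^'n)) \<partial>lebesgue) \<le> Cb * r powr s"
    using ball_powr_integral_bound[where 'a = "real^'n", of s] s_pos two_s_le_N by auto
  define c1 where "c1 = kappa CARD('n) s * 2 powr s / s * 3 powr (s / 2)"
  have c1: "c1 \<ge> 0"
    using kappa_pos s_pos by (simp add: c1_def)
  show thesis
  proof (rule that[of "(c1 + Kcal CARD('n) s) * Cb * 5 powr s"])
    fix \<epsilon> :: real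
    assume \<epsilon>: "\<epsilon> > 0"
    note int1 = int[of "5 * \<epsilon>" "\<epsilon> *\<^sub>R e1"] and int2 = int[of "5 * \<epsilon>" 0]
    show "integrable lebesgue (Gscaled_near_bound \<epsilon>)"
      using int1 int2 \<epsilon> unfolding Gscaled_near_bound_def[abs_def]
      by (intro integrable_mult_right Bochner_Integration.integrable_add) auto
    have "integral\<^sup>L lebesgue (Gscaled_near_bound \<epsilon>)
      = c1 * (\<integral>x. indicator (ball (\<epsilon> *\<^sub>R e1) (5 * \<epsilon>)) x * norm (x - \<epsilon> *\<^sub>R e1) powr (s - real CARD('n)) \<partial>lebesgue)
        + Kcal CARD('n) s
          * (\<integral>x. indicator (ball (0::real^'n) (5 * \<epsilon>)) x * norm x powr (s - real CARD('n)) \<partial>lebesgue)"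
      using int1 int2 \<epsilon> by (simp add: Gscaled_near_bound_def[abs_def] c1_def)
    also have "\<dots> \<le> c1 * (Cb * (5 * \<epsilon>) powr s) + Kcal CARD('n) s * (Cb * (5 * \<epsilon>) powr s)"
      using le[of "5 * \<epsilon>" "\<epsilon> *\<^sub>R e1"] le[of "5 * \<epsilon>" 0] \<epsilon> c1 Kcal_pos
      by (intro add_mono mult_left_mono) auto
    also have "\<dots> = (c1 + Kcal CARD('n) s) * Cb * 5 powr s * \<epsilon> powr s"
      using \<epsilon> by (simp add: powr_mult algebra_simps)
    finally show "integral\<^sup>L lebesgue (Gscaled_near_bound \<epsilon>) \<le> (c1 + Kcal CARD('n) s) * Cb * 5 powr s * \<epsilon> powr s" .
  qed
qed

lemma Gscaled_near_weighted_le: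
  assumes qB: "AE x in lebesgue. x \<in> halfsp i1 \<longrightarrow> \<bar>q x\<bar> \<le> B" and \<epsilon>: "\<epsilon> > 0"
  shows "AE x in lebesgue. indicator (halfsp i1 \<inter> cball 0 (3 * \<epsilon>)) x * (\<bar>Gscaled \<epsilon> x - Pcal i1 s x\<bar> * \<bar>q x\<bar>)
    \<le> \<bar>B\<bar> * Gscaled_near_bound \<epsilon> x"
  using qB
proof eventually_elim
  case (elim x)
  show ?case
  proof (cases "x \<in> halfsp i1 \<inter> cball 0 (3 * \<epsilon>)")
    case True
    then show ?thesis
      using Gscaled_diff_le_near_bound[OF \<epsilon> True] elim Gscaled_near_bound_nonneg[of \<epsilon> x]
      by (simp add: mult.commute mult_mono)
  qed (simp add: Gscaled_near_bound_nonneg)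
qed

lemma Gscaled_near_integral_tendsto_0:
  assumes qm: "q \<in> borel_measurable lebesgue"
    and qB: "AE x in lebesgue. x \<in> halfsp i1 \<longrightarrow> \<bar>q x\<bar> \<le> B"
  shows "\<And>\<epsilon>. \<epsilon> > 0 \<Longrightarrow> set_integrable lebesgue (halfsp i1 \<inter> cball 0 (3 * \<epsilon>))
      (\<lambda>x. \<bar>Gscaled \<epsilon> x - Pcal i1 s x\<bar> * \<bar>q x\<bar>)"
    and "((\<lambda>\<epsilon>. LINT x:halfsp i1 \<inter> cball 0 (3 * \<epsilon>)|lebesgue.
      \<bar>Gscaled \<epsilon> x - Pcal i1 s x\<bar> * \<bar>q x\<bar>) \<longlongrightarrow> 0) (at_right 0)"
proof -
  obtain C where int: "\<And>\<epsilon>. \<epsilon> > 0 \<Longrightarrow> integrable lebesgue (Gscaled_near_bound \<epsilon>)"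
    and le: "\<And>\<epsilon>. \<epsilon> > 0 \<Longrightarrow> integral\<^sup>L lebesgue (Gscaled_near_bound \<epsilon>) \<le> C * \<epsilon> powr s"
    using Gscaled_near_bound_integral by blast
  define f where "f \<epsilon> x = indicator (halfsp i1 \<inter> cball 0 (3 * \<epsilon>)) x * (\<bar>Gscaled \<epsilon> x - Pcal i1 s x\<bar> * \<bar>q x\<bar>)"
    for \<epsilon> x
  have f_nonneg: "0 \<le> f \<epsilon> x" for \<epsilon> x
    by (simp add: f_def)
  note f_le = Gscaled_near_weighted_le[OF qB, folded f_def]
  have f_int: "integrable lebesgue (f \<epsilon>)" if "\<epsilon> > 0" for \<epsilon>
  proof (rule Bochner_Integration.integrable_bound[OF integrable_mult_right[OF int[OF that], of "\<bar>B\<bar>"]])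
    show "f \<epsilon> \<in> borel_measurable lebesgue"
      using qm unfolding f_def by measurable
    show "AE x in lebesgue. norm (f \<epsilon> x) \<le> norm (\<bar>B\<bar> * Gscaled_near_bound \<epsilon> x)"
      using f_le[OF that] by eventually_elim (metis abs_ge_self abs_of_nonneg f_nonneg order_trans real_norm_def)
  qed
  show "set_integrable lebesgue (halfsp i1 \<inter> cball 0 (3 * \<epsilon>)) (\<lambda>x. \<bar>Gscaled \<epsilon> x - Pcal i1 s x\<bar> * \<bar>q x\<bar>)"
    if "\<epsilon> > 0" for \<epsilon>
    using f_int[OF that] unfolding f_def set_integrable_def by simp
  have "((\<lambda>\<epsilon>. integral\<^sup>L lebesgue (f \<epsilon>)) \<longlongrightarrow> 0) (at_right 0)"
  proof (rule tendsto_sandwich[where f = "\<lambda>_. 0" and h = "\<lambda>\<epsilon>. \<bar>B\<bar> * (C * \<epsilon> powr s)"])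
    show "\<forall>\<^sub>F \<epsilon> in at_right 0. 0 \<le> integral\<^sup>L lebesgue (f \<epsilon>)"
      using f_nonneg by (intro always_eventually allI integral_nonneg_AE AE_I2) simp
    show "\<forall>\<^sub>F \<epsilon> in at_right 0. integral\<^sup>L lebesgue (f \<epsilon>) \<le> \<bar>B\<bar> * (C * \<epsilon> powr s)"
      using eventually_at_right_less[of 0]
    proof eventually_elim
      case (elim \<epsilon>)
      have "integral\<^sup>L lebesgue (f \<epsilon>) \<le> (\<integral>x. \<bar>B\<bar> * Gscaled_near_bound \<epsilon> x \<partial>lebesgue)"
        by (rule integral_mono_AE[OF f_int[OF elim] integrable_mult_right[OF int[OF elim]] f_le[OF elim]])
      also have "\<dots> \<le> \<bar>B\<bar> * (C * \<epsilon> powr s)"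
        using le[OF elim] by (simp add: mult_left_mono)
      finally show ?case .
    qed
    show "((\<lambda>\<epsilon>. \<bar>B\<bar> * (C * \<epsilon> powr s)) \<longlongrightarrow> 0) (at_right 0)"
      using tendsto_mult_right_zero[OF tendsto_mult_right_zero[OF tendsto_powr_at_right_0[OF s_pos]]]
      by simp
  qed simp
  then show "((\<lambda>\<epsilon>. LINT x:halfsp i1 \<inter> cball 0 (3 * \<epsilon>)|lebesgue.
      \<bar>Gscaled \<epsilon> x - Pcal i1 s x\<bar> * \<bar>q x\<bar>) \<longlongrightarrow> 0) (at_right 0)"
    unfolding f_def set_lebesgue_integral_def by simp
qed

lemma Gscaled_diff_le_far_indicator:
  assumes \<epsilon>: "\<epsilon> > 0"
  shows "indicator (halfsp i1 - cball 0 (3 * \<epsilon>)) x * \<bar>Gscaled \<epsilon> x - Pcal i1 s x\<bar>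
    \<le> ((2 / 3) powr - real CARD('n) + 1) * (indicator (halfsp i1) x * Pcal i1 s x)"
proof (cases "x \<in> halfsp i1 - cball 0 (3 * \<epsilon>)")
  case True
  then have "x \<in> halfsp i1" and "3 * \<epsilon> < norm x"
    by auto
  from Gscaled_diff_le_far[OF \<epsilon> this] True show ?thesis
    by simp
next
  case False
  then have "indicator (halfsp i1 - cball 0 (3 * \<epsilon>)) x * \<bar>Gscaled \<epsilon> x - Pcal i1 s x\<bar> = 0"
    by simp
  moreover have "0 \<le> ((2 / 3) powr - real CARD('n) + 1) * (indicator (halfsp i1) x * Pcal i1 s x)"
    using Pcal_nonneg[of x] by (simp add: add_nonneg_nonneg)
  ultimately show ?thesis
    by linarith
qed

lemma tendsto_Gscaled_diff_far_indicator:
  "((\<lambda>\<epsilon>. indicator (halfsp i1 - cball 0 (3 * \<epsilon>)) x * \<bar>Gscaled \<epsilon> x - Pcal i1 s x\<bar>) \<longlongrightarrow> 0) (at_right 0)"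
proof (cases "x \<in> halfsp i1")
  case True
  then have "norm x > 0"
    by (auto simp: halfsp_def)
  then have "\<forall>\<^sub>F \<epsilon> in at_right 0. \<epsilon> < norm x / 3"
    by (intro order_tendstoD(2)[OF tendsto_ident_at]) auto
  then have "\<forall>\<^sub>F \<epsilon> in at_right 0.
      \<bar>Gscaled \<epsilon> x - Pcal i1 s x\<bar> = indicator (halfsp i1 - cball 0 (3 * \<epsilon>)) x * \<bar>Gscaled \<epsilon> x - Pcal i1 s x\<bar>"
    by eventually_elim (use True in auto)
  with tendsto_rabs_zero[OF LIM_zero[OF tendsto_Gscaled[OF True]]] show ?thesis
    by (rule Lim_transform_eventually)
qed simp

lemma Gscaled_far_integral_tendsto_0:
  assumes qm: "q \<in> borel_measurable lebesgue"
    and qP: "set_integrable lebesgue (halfsp i1) (\<lambda>x. Pcal i1 s x * q x)"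
  shows "\<And>\<epsilon>. \<epsilon> > 0 \<Longrightarrow> set_integrable lebesgue (halfsp i1 - cball 0 (3 * \<epsilon>))
      (\<lambda>x. \<bar>Gscaled \<epsilon> x - Pcal i1 s x\<bar> * \<bar>q x\<bar>)"
    and "((\<lambda>\<epsilon>. LINT x:halfsp i1 - cball 0 (3 * \<epsilon>)|lebesgue.
      \<bar>Gscaled \<epsilon> x - Pcal i1 s x\<bar> * \<bar>q x\<bar>) \<longlongrightarrow> 0) (at_right 0)"
proof -
  define f where "f \<epsilon> x = indicator (halfsp i1 - cball 0 (3 * \<epsilon>)) x * \<bar>Gscaled \<epsilon> x - Pcal i1 s x\<bar> * \<bar>q x\<bar>"
    for \<epsilon> x
  define w where "w x = ((2 / 3) powr - real CARD('n) + 1) * (indicator (halfsp i1) x * Pcal i1 s x) * \<bar>q x\<bar>"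
    for x
  have w: "integrable lebesgue w"
    using set_integrable_abs[OF qP] Pcal_nonneg
    unfolding w_def set_integrable_def by (simp add: abs_mult mult.assoc)
  have fm: "f \<epsilon> \<in> borel_measurable lebesgue" for \<epsilon>
    using qm unfolding f_def by measurable
  have f_le: "norm (f \<epsilon> x) \<le> w x" if "\<epsilon> > 0" for \<epsilon> x
    using mult_right_mono[OF Gscaled_diff_le_far_indicator[OF that, of x] abs_ge_zero[of "q x"]]
    by (simp add: f_def w_def abs_mult)
  have f_int: "integrable lebesgue (f \<epsilon>)" if "\<epsilon> > 0" for \<epsilon>
    using f_le[OF that] by (intro Bochner_Integration.integrable_bound[OF w fm] AE_I2)
      (metis abs_ge_self order_trans real_norm_def)
  show "set_integrable lebesgue (halfsp i1 - cball 0 (3 * \<epsilon>)) (\<lambda>x. \<bar>Gscaled \<epsilon> x - Pcal i1 s x\<bar> * \<bar>q x\<bar>)"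
    if "\<epsilon> > 0" for \<epsilon>
    using f_int[OF that] unfolding f_def set_integrable_def by (simp add: mult.assoc)
  have "((\<lambda>\<epsilon>. integral\<^sup>L lebesgue (f \<epsilon>)) \<longlongrightarrow> integral\<^sup>L lebesgue (\<lambda>x::real^'n. 0)) (at_right 0)"
  proof (rule integral_dominated_convergence_at_right_0[where w = w])
    show "f \<epsilon> \<in> borel_measurable lebesgue" for \<epsilon>
      by (rule fm)
    show "integrable lebesgue w"
      by (rule w)
    show "AE x in lebesgue. ((\<lambda>\<epsilon>. f \<epsilon> x) \<longlongrightarrow> 0) (at_right 0)"
      using tendsto_mult[OF tendsto_Gscaled_diff_far_indicator tendsto_const] by (simp add: f_def)
    show "\<forall>\<^sub>F \<epsilon> in at_right 0. AE x in lebesgue. norm (f \<epsilon> x) \<le> w x"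
      using eventually_at_right_less[of 0] by (rule eventually_mono) (rule AE_I2, erule f_le)
  qed simp
  then show "((\<lambda>\<epsilon>. LINT x:halfsp i1 - cball 0 (3 * \<epsilon>)|lebesgue.
      \<bar>Gscaled \<epsilon> x - Pcal i1 s x\<bar> * \<bar>q x\<bar>) \<longlongrightarrow> 0) (at_right 0)"
    unfolding f_def set_lebesgue_integral_def by (simp add: mult.assoc)
qed

lemma Gscaled_weighted_convergence:
  assumes qm: "q \<in> borel_measurable lebesgue"
    and qB: "AE x in lebesgue. x \<in> halfsp i1 \<longrightarrow> \<bar>q x\<bar> \<le> B"
    and qP: "set_integrable lebesgue (halfsp i1) (\<lambda>x. Pcal i1 s x * q x)"
  shows "\<forall>\<^sub>F \<epsilon> in at_right 0. set_integrable lebesgue (halfsp i1) (\<lambda>x. (Gscaled \<epsilon> x - Pcal i1 s x) * q x)"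
    and "((\<lambda>\<epsilon>. LINT x:halfsp i1|lebesgue. \<bar>Gscaled \<epsilon> x - Pcal i1 s x\<bar> * \<bar>q x\<bar>) \<longlongrightarrow> 0) (at_right 0)"
proof -
  note near = Gscaled_near_integral_tendsto_0[OF qm qB]
  note far = Gscaled_far_integral_tendsto_0[OF qm qP]
  have split: "halfsp i1 = (halfsp i1 \<inter> cball 0 (3 * \<epsilon>)) \<union> (halfsp i1 - cball 0 (3 * \<epsilon>))" for \<epsilon>
    by blast
  have int: "set_integrable lebesgue (halfsp i1) (\<lambda>x. \<bar>Gscaled \<epsilon> x - Pcal i1 s x\<bar> * \<bar>q x\<bar>)"
    if "\<epsilon> > 0" for \<epsilon>
    by (subst split[of \<epsilon>], rule set_integrable_Un[OF near(1)[OF that] far(1)[OF that]]) auto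
  have sum: "(LINT x:halfsp i1|lebesgue. \<bar>Gscaled \<epsilon> x - Pcal i1 s x\<bar> * \<bar>q x\<bar>)
      = (LINT x:halfsp i1 \<inter> cball 0 (3 * \<epsilon>)|lebesgue. \<bar>Gscaled \<epsilon> x - Pcal i1 s x\<bar> * \<bar>q x\<bar>)
      + (LINT x:halfsp i1 - cball 0 (3 * \<epsilon>)|lebesgue. \<bar>Gscaled \<epsilon> x - Pcal i1 s x\<bar> * \<bar>q x\<bar>)"
    if "\<epsilon> > 0" for \<epsilon>
    by (subst split[of \<epsilon>], rule set_integral_Un[OF _ near(1)[OF that] far(1)[OF that]]) auto
  show "\<forall>\<^sub>F \<epsilon> in at_right 0. set_integrable lebesgue (halfsp i1) (\<lambda>x. (Gscaled \<epsilon> x - Pcal i1 s x) * q x)"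
    using eventually_at_right_less[of 0]
  proof eventually_elim
    case (elim \<epsilon>)
    with int[OF elim] qm show ?case
      by (subst set_integrable_abs_iff'[symmetric]) (simp_all add: abs_mult)
  qed
  have "\<forall>\<^sub>F \<epsilon> in at_right 0.
      (LINT x:halfsp i1 \<inter> cball 0 (3 * \<epsilon>)|lebesgue. \<bar>Gscaled \<epsilon> x - Pcal i1 s x\<bar> * \<bar>q x\<bar>)
      + (LINT x:halfsp i1 - cball 0 (3 * \<epsilon>)|lebesgue. \<bar>Gscaled \<epsilon> x - Pcal i1 s x\<bar> * \<bar>q x\<bar>)
      = (LINT x:halfsp i1|lebesgue. \<bar>Gscaled \<epsilon> x - Pcal i1 s x\<bar> * \<bar>q x\<bar>)"
    using eventually_at_right_less[of 0] by (rule eventually_mono) (rule sum[symmetric])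
  from Lim_transform_eventually[OF tendsto_add_zero[OF near(2) far(2)] this]
  show "((\<lambda>\<epsilon>. LINT x:halfsp i1|lebesgue. \<bar>Gscaled \<epsilon> x - Pcal i1 s x\<bar> * \<bar>q x\<bar>) \<longlongrightarrow> 0) (at_right 0)" .
qed

lemma tendsto_set_integral_Gscaled_mult:
  assumes qm: "q \<in> borel_measurable lebesgue"
    and qB: "AE x in lebesgue. x \<in> halfsp i1 \<longrightarrow> \<bar>q x\<bar> \<le> B"
    and qP: "set_integrable lebesgue (halfsp i1) (\<lambda>x. Pcal i1 s x * q x)"
  shows "((\<lambda>\<epsilon>. LINT x:halfsp i1|lebesgue. Gscaled \<epsilon> x * q x)
    \<longlongrightarrow> (LINT x:halfsp i1|lebesgue. Pcal i1 s x * q x)) (at_right 0)"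
proof -
  note conv = Gscaled_weighted_convergence[OF qm qB qP]
  have "((\<lambda>\<epsilon>. (LINT x:halfsp i1|lebesgue. Gscaled \<epsilon> x * q x) - (LINT x:halfsp i1|lebesgue. Pcal i1 s x * q x))
      \<longlongrightarrow> 0) (at_right 0)"
  proof (rule Lim_null_comparison[OF _ conv(2)])
    show "\<forall>\<^sub>F \<epsilon> in at_right 0. norm ((LINT x:halfsp i1|lebesgue. Gscaled \<epsilon> x * q x)
        - (LINT x:halfsp i1|lebesgue. Pcal i1 s x * q x))
      \<le> (LINT x:halfsp i1|lebesgue. \<bar>Gscaled \<epsilon> x - Pcal i1 s x\<bar> * \<bar>q x\<bar>)"
      using conv(1)
    proof eventually_elim
      case (elim \<epsilon>)
      have "(LINT x:halfsp i1|lebesgue. Gscaled \<epsilon> x * q x) - (LINT x:halfsp i1|lebesgue. Pcal i1 s x * q x)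
          = (LINT x:halfsp i1|lebesgue. (Gscaled \<epsilon> x - Pcal i1 s x) * q x)"
        using set_integral_add(2)[OF elim qP] by (simp add: algebra_simps)
      also have "norm \<dots> \<le> (LINT x:halfsp i1|lebesgue. \<bar>Gscaled \<epsilon> x - Pcal i1 s x\<bar> * \<bar>q x\<bar>)"
        using set_integral_norm_bound[OF elim] by (simp add: abs_mult)
      finally show ?case .
    qed
  qed
  then show ?thesis
    by (rule LIM_zero_cancel)
qed

lemma Pcal_weight_le:
  assumes x: "x \<in> halfsp i1" "1 < norm x"
  shows "Pcal i1 s x * (1 / (1 + norm x powr (real CARD('n) + 2 * s)))
    \<le> Kcal CARD('n) s * norm x powr - (real CARD('n) + s)"
proof -
  have pos: "0 < norm x powr (2 * s)"
    using x by auto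
  have "norm x powr (2 * s) \<le> norm x powr (real CARD('n) + 2 * s)"
    using x by (intro powr_mono) auto
  then have "1 / (1 + norm x powr (real CARD('n) + 2 * s)) \<le> 1 / norm x powr (2 * s)"
    using pos by (intro divide_left_mono mult_pos_pos add_pos_nonneg) auto
  then have "Pcal i1 s x * (1 / (1 + norm x powr (real CARD('n) + 2 * s)))
      \<le> Kcal CARD('n) s * norm x powr (s - real CARD('n)) * (1 / norm x powr (2 * s))"
    using x Pcal_le[of x] Pcal_nonneg[of x] by (intro mult_mono) auto
  also have "\<dots> = Kcal CARD('n) s * norm x powr (s - real CARD('n) - 2 * s)"
    using powr_diff[of "norm x" "s - real CARD('n)" "2 * s"] by simp
  also have "s - real CARD('n) - 2 * s = - (real CARD('n) + s)"
    by simp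
  finally show ?thesis .
qed

lemma set_integrable_Pcal_weight_tail:
  "set_integrable lebesgue (halfsp i1 \<inter> {x. 1 < norm x})
     (\<lambda>x. Pcal i1 s x * (1 / (1 + norm x powr (real CARD('n) + 2 * s))))"
proof (rule set_integrable_bound[where f = "\<lambda>x. Kcal CARD('n) s * norm x powr - (real CARD('n) + s)"])
  have "set_integrable lebesgue {x. 1 < norm x} (\<lambda>x::real^'n. norm x powr - (real CARD('n) + s))"
    using integrable_powr_outside_ball[OF s_pos zero_less_one, of "0::real^'n"]
    by (simp add: set_integrable_def)
  then have "set_integrable lebesgue (halfsp i1 \<inter> {x. 1 < norm x}) (\<lambda>x. norm x powr - (real CARD('n) + s))"
    by (rule set_integrable_subset) auto
  then show "set_integrable lebesgue (halfsp i1 \<inter> {x. 1 < norm x})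
      (\<lambda>x. Kcal CARD('n) s * norm x powr - (real CARD('n) + s))"
    by (rule set_integrable_mult_right)
  show "set_borel_measurable lebesgue (halfsp i1 \<inter> {x. 1 < norm x})
      (\<lambda>x. Pcal i1 s x * (1 / (1 + norm x powr (real CARD('n) + 2 * s))))"
    unfolding set_borel_measurable_def by measurable
  show "AE x in lebesgue. x \<in> halfsp i1 \<inter> {x. 1 < norm x} \<longrightarrow>
      norm (Pcal i1 s x * (1 / (1 + norm x powr (real CARD('n) + 2 * s))))
      \<le> norm (Kcal CARD('n) s * norm x powr - (real CARD('n) + s))"
  proof (intro AE_I2 impI)
    fix x :: "real^'n"
    assume "x \<in> halfsp i1 \<inter> {x. 1 < norm x}"
    then have le: "Pcal i1 s x * (1 / (1 + norm x powr (real CARD('n) + 2 * s)))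
        \<le> Kcal CARD('n) s * norm x powr - (real CARD('n) + s)"
      by (intro Pcal_weight_le) auto
    have "0 \<le> Pcal i1 s x * (1 / (1 + norm x powr (real CARD('n) + 2 * s)))"
      using Pcal_nonneg[of x] by simp
    with le show "norm (Pcal i1 s x * (1 / (1 + norm x powr (real CARD('n) + 2 * s))))
        \<le> norm (Kcal CARD('n) s * norm x powr - (real CARD('n) + s))"
      by (metis abs_ge_self abs_of_nonneg order_trans real_norm_def)
  qed
qed

lemma Gscaled_L1s_convergence:
  "(\<forall>\<^sub>F \<epsilon> in at_right 0. set_integrable lebesgue (halfsp i1)
      (\<lambda>x. \<bar>\<epsilon> powr (-s) * Ginf i1 s x (\<epsilon> *\<^sub>R axis i1 1) - Pcal i1 s x\<bar>
        / (1 + norm x powr (real CARD('n) + 2 * s))))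
  \<and> ((\<lambda>\<epsilon>. LINT x:halfsp i1|lebesgue.
      \<bar>\<epsilon> powr (-s) * Ginf i1 s x (\<epsilon> *\<^sub>R axis i1 1) - Pcal i1 s x\<bar>
        / (1 + norm x powr (real CARD('n) + 2 * s))) \<longlongrightarrow> 0) (at_right 0)"
proof -
  define w where "w x = 1 / (1 + norm x powr (real CARD('n) + 2 * s))" for x :: "real^'n"
  have w_pos: "0 < w x" for x
    by (simp add: w_def add_pos_nonneg)
  have wm: "w \<in> borel_measurable lebesgue"
    unfolding w_def by measurable
  have wB: "AE x in lebesgue. x \<in> halfsp i1 \<longrightarrow> \<bar>w x\<bar> \<le> 1"
    by (intro AE_I2) (simp add: w_def add_pos_nonneg)
  note conv = Gscaled_weighted_convergence[OF wm wB
      set_integrable_Pcal_mult[OF wm wB set_integrable_Pcal_weight_tail[folded w_def]]]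
  have eq: "\<bar>\<epsilon> powr (-s) * Ginf i1 s x (\<epsilon> *\<^sub>R axis i1 1) - Pcal i1 s x\<bar>
      / (1 + norm x powr (real CARD('n) + 2 * s)) = \<bar>Gscaled \<epsilon> x - Pcal i1 s x\<bar> * \<bar>w x\<bar>" for \<epsilon> x
    using w_pos[of x] by (simp add: Gscaled_def w_def)
  show ?thesis
  proof
    show "\<forall>\<^sub>F \<epsilon> in at_right 0. set_integrable lebesgue (halfsp i1)
      (\<lambda>x. \<bar>\<epsilon> powr (-s) * Ginf i1 s x (\<epsilon> *\<^sub>R axis i1 1) - Pcal i1 s x\<bar>
        / (1 + norm x powr (real CARD('n) + 2 * s)))"
      using conv(1) by eventually_elim (drule set_integrable_abs, simp add: eq abs_mult)
    show "((\<lambda>\<epsilon>. LINT x:halfsp i1|lebesgue.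
      \<bar>\<epsilon> powr (-s) * Ginf i1 s x (\<epsilon> *\<^sub>R axis i1 1) - Pcal i1 s x\<bar>
        / (1 + norm x powr (real CARD('n) + 2 * s))) \<longlongrightarrow> 0) (at_right 0)"
      using conv(2) by (simp add: eq)
  qed
qed

lemma set_integrable_Pcal_mult_tail:
  assumes qm: "q \<in> borel_measurable lebesgue"
    and \<psi>: "set_integrable lebesgue (halfsp i1) (\<lambda>x. x $ i1 powr s * \<psi> x)"
    and q\<psi>: "AE x in lebesgue. x \<in> halfsp i1 \<longrightarrow> \<bar>q x\<bar> \<le> \<psi> x"
  shows "set_integrable lebesgue (halfsp i1 \<inter> {x. 1 < norm x}) (\<lambda>x. Pcal i1 s x * q x)"
proof (rule set_integrable_bound[where f = "\<lambda>x. Kcal CARD('n) s * (x $ i1 powr s * \<psi> x)"])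
  have "set_integrable lebesgue (halfsp i1 \<inter> {x. 1 < norm x}) (\<lambda>x. x $ i1 powr s * \<psi> x)"
    by (rule set_integrable_subset[OF \<psi>]) auto
  then show "set_integrable lebesgue (halfsp i1 \<inter> {x. 1 < norm x})
      (\<lambda>x. Kcal CARD('n) s * (x $ i1 powr s * \<psi> x))"
    by (rule set_integrable_mult_right)
  show "set_borel_measurable lebesgue (halfsp i1 \<inter> {x. 1 < norm x}) (\<lambda>x. Pcal i1 s x * q x)"
    using qm unfolding set_borel_measurable_def by measurable
  show "AE x in lebesgue. x \<in> halfsp i1 \<inter> {x. 1 < norm x} \<longrightarrow>
      norm (Pcal i1 s x * q x) \<le> norm (Kcal CARD('n) s * (x $ i1 powr s * \<psi> x))"
    using q\<psi>
  proof eventually_elim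
    case (elim x)
    show ?case
    proof
      assume x: "x \<in> halfsp i1 \<inter> {x. 1 < norm x}"
      then have q: "\<bar>q x\<bar> \<le> \<psi> x"
        using elim by simp
      have "1 \<le> norm x powr real CARD('n)"
        using x by (intro ge_one_powr_ge_zero) auto
      then have "norm x powr - real CARD('n) \<le> 1"
        by (simp add: powr_minus_divide divide_le_eq_1)
      then have "Pcal i1 s x \<le> Kcal CARD('n) s * x $ i1 powr s"
        unfolding Pcal_eq using Kcal_pos mult_left_mono[of _ 1 "Kcal CARD('n) s * x $ i1 powr s"] by simp
      then have "Pcal i1 s x * \<bar>q x\<bar> \<le> Kcal CARD('n) s * x $ i1 powr s * \<psi> x"
        using q Pcal_nonneg[of x] Kcal_pos by (intro mult_mono) auto
      then have "norm (Pcal i1 s x * q x) \<le> Kcal CARD('n) s * (x $ i1 powr s * \<psi> x)"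
        using Pcal_nonneg[of x] by (simp add: abs_mult abs_of_nonneg mult.assoc)
      then show "norm (Pcal i1 s x * q x) \<le> norm (Kcal CARD('n) s * (x $ i1 powr s * \<psi> x))"
        by (metis abs_ge_self order_trans real_norm_def)
    qed
  qed
qed

lemma Xs_frac_lap_weight:
  assumes "\<phi> \<in> Xs i1 s"
  obtains B where "(\<lambda>x. indicator (halfsp i1) x * frac_lap s \<phi> x) \<in> borel_measurable lebesgue"
    "AE x in lebesgue. x \<in> halfsp i1 \<longrightarrow> \<bar>indicator (halfsp i1) x * frac_lap s \<phi> x\<bar> \<le> B"
    "set_integrable lebesgue (halfsp i1) (\<lambda>x. Pcal i1 s x * (indicator (halfsp i1) x * frac_lap s \<phi> x))"
proof -
  from assms obtain C \<psi> \<epsilon>0 where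
    cont: "continuous_on UNIV \<phi>" and
    lim: "AE x in lebesgue. x \<in> halfsp i1 \<longrightarrow>
      ((\<lambda>\<epsilon>. frac_lap_eps s \<epsilon> \<phi> x) \<longlongrightarrow> frac_lap s \<phi> x) (at_right 0) \<and> \<bar>frac_lap s \<phi> x\<bar> \<le> C" and
    \<psi>: "set_integrable lebesgue (halfsp i1) (\<lambda>x. x $ i1 powr s * \<psi> x)" and
    \<epsilon>0: "\<epsilon>0 > 0" and
    bound: "\<And>\<epsilon>. \<epsilon> \<in> {0<..\<epsilon>0} \<Longrightarrow> AE x in lebesgue. x \<in> halfsp i1 \<longrightarrow> \<bar>frac_lap_eps s \<epsilon> \<phi> x\<bar> \<le> \<psi> x"
    unfolding Xs_def by blast
  define q where "q x = indicator (halfsp i1) x * frac_lap s \<phi> x" for x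
  have lim': "AE x in lebesgue. x \<in> halfsp i1 \<longrightarrow> ((\<lambda>\<epsilon>. frac_lap_eps s \<epsilon> \<phi> x) \<longlongrightarrow> frac_lap s \<phi> x) (at_right 0)"
    using lim by eventually_elim auto
  have qm: "q \<in> borel_measurable lebesgue"
    unfolding q_def using borel_measurable_frac_lap_eps[OF cont] lim'
    by (intro borel_measurable_indicator_mult_AE_limit) auto
  have qB: "AE x in lebesgue. x \<in> halfsp i1 \<longrightarrow> \<bar>q x\<bar> \<le> C"
    using lim by eventually_elim (auto simp: q_def)
  have q\<psi>: "AE x in lebesgue. x \<in> halfsp i1 \<longrightarrow> \<bar>q x\<bar> \<le> \<psi> x"
  proof -
    have "AE x in lebesgue. x \<in> halfsp i1 \<longrightarrow> \<bar>frac_lap s \<phi> x\<bar> \<le> \<psi> x"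
      by (rule AE_abs_le_of_tendsto_at_right_0[OF lim' \<epsilon>0]) (rule bound)
    then show ?thesis
      by eventually_elim (auto simp: q_def)
  qed
  have "set_integrable lebesgue (halfsp i1 \<inter> {x. 1 < norm x}) (\<lambda>x. Pcal i1 s x * q x)"
    by (rule set_integrable_Pcal_mult_tail[OF qm \<psi> q\<psi>])
  from set_integrable_Pcal_mult[OF qm qB this] show thesis
    using that[OF qm[unfolded q_def] qB[unfolded q_def]] by (simp add: q_def)
qed

lemma tendsto_set_integral_Gscaled_frac_lap:
  assumes "\<phi> \<in> Xs i1 s"
  shows "((\<lambda>\<epsilon>. LINT x:halfsp i1|lebesgue. \<epsilon> powr (-s) * Ginf i1 s x (\<epsilon> *\<^sub>R axis i1 1) * frac_lap s \<phi> x)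
    \<longlongrightarrow> (LINT x:halfsp i1|lebesgue. Pcal i1 s x * frac_lap s \<phi> x)) (at_right 0)"
proof -
  obtain B where "(\<lambda>x. indicator (halfsp i1) x * frac_lap s \<phi> x) \<in> borel_measurable lebesgue"
    "AE x in lebesgue. x \<in> halfsp i1 \<longrightarrow> \<bar>indicator (halfsp i1) x * frac_lap s \<phi> x\<bar> \<le> B"
    "set_integrable lebesgue (halfsp i1) (\<lambda>x. Pcal i1 s x * (indicator (halfsp i1) x * frac_lap s \<phi> x))"
    using Xs_frac_lap_weight[OF assms] by blast
  note lim = tendsto_set_integral_Gscaled_mult[OF this]
  have "(LINT x:halfsp i1|lebesgue. Gscaled \<epsilon> x * (indicator (halfsp i1) x * frac_lap s \<phi> x))
      = (LINT x:halfsp i1|lebesgue. \<epsilon> powr (-s) * Ginf i1 s x (\<epsilon> *\<^sub>R axis i1 1) * frac_lap s \<phi> x)" for \<epsilon>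
    by (rule set_lebesgue_integral_cong) (auto simp: Gscaled_def)
  moreover have "(LINT x:halfsp i1|lebesgue. Pcal i1 s x * (indicator (halfsp i1) x * frac_lap s \<phi> x))
      = (LINT x:halfsp i1|lebesgue. Pcal i1 s x * frac_lap s \<phi> x)"
    by (rule set_lebesgue_integral_cong) auto
  ultimately show ?thesis
    using lim by simp
qed

end

theorem lemma3p1:
  fixes i1 :: "'n::finite" and s :: real
  assumes "0 < s" "s < 1" "real CARD('n) \<ge> 2 * s"
  shows "(\<forall>\<^sub>F \<epsilon> in at_right 0. set_integrable lebesgue (halfsp i1)
            (\<lambda>x. \<bar>\<epsilon> powr (-s) * Ginf i1 s x (\<epsilon> *\<^sub>R axis i1 1) - Pcal i1 s x\<bar>
                 / (1 + norm x powr (real CARD('n) + 2 * s))))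
    \<and> ((\<lambda>\<epsilon>. LINT x:halfsp i1|lebesgue.
            \<bar>\<epsilon> powr (-s) * Ginf i1 s x (\<epsilon> *\<^sub>R axis i1 1) - Pcal i1 s x\<bar>
                 / (1 + norm x powr (real CARD('n) + 2 * s))) \<longlongrightarrow> 0) (at_right 0)
    \<and> (\<forall>K. compact K \<and> K \<subseteq> halfsp i1 \<longrightarrow>
          uniform_limit K (\<lambda>\<epsilon> x. \<epsilon> powr (-s) * Ginf i1 s x (\<epsilon> *\<^sub>R axis i1 1))
            (Pcal i1 s) (at_right 0))
    \<and> (\<forall>\<phi>\<in>Xs i1 s.
          ((\<lambda>\<epsilon>. LINT x:halfsp i1|lebesgue.
               \<epsilon> powr (-s) * Ginf i1 s x (\<epsilon> *\<^sub>R axis i1 1) * frac_lap s \<phi> x)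
           \<longlongrightarrow> (LINT x:halfsp i1|lebesgue. Pcal i1 s x * frac_lap s \<phi> x)) (at_right 0))"
proof -
  interpret halfspace_green i1 s
    using assms by unfold_locales auto
  have "Gscaled = (\<lambda>\<epsilon> x. \<epsilon> powr (-s) * Ginf i1 s x (\<epsilon> *\<^sub>R axis i1 1))"
    by (simp add: fun_eq_iff Gscaled_def)
  then show ?thesis
    using Gscaled_L1s_convergence uniform_limit_Gscaled tendsto_set_integral_Gscaled_frac_lap by auto
qed

end
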